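(* For every $k\in\{1,\dots,m\}$ and every configuration $\tau$ on $V\setminus B_k$, $\lambda(\boldsymbol{I}_k^\tau)\ge\frac17 e^{-2\beta dL^d}$.
   Context: $V\subset\mathbb{Z}^d$ a finite $d$-dimensional cube, $G=(V,E)$; Potts measure with free boundary $\pi(\sigma)\propto\exp(\beta\,\#\{(u,v)\in E:\sigma(u)=\sigma(v)\})$ on $\{1,\dots,q\}^V$, $\beta>0$, $p=1-e^{-\beta}$. Tilings $\mathcal{D}=\{B_1,\dots,B_m\}$: for odd $L$ and $x\in\{0,\dots,L+2\}^d$, $B_x=V\cap\bigcup_{h\in\mathbb{Z}^d}\{y:\|y-(x+(L+3)h)\|_\infty\le(L-1)/2\}$ (a union of cubes of volume at most $L^d$ at mutual distance 4). $\boldsymbol{I}_k^\tau$: Markov chain on configurations of $B_k$ which, from $\sigma_t$, includes each edge of $E$ that is monochromatic under $\sigma_t\cup\tau$ independently with probability $p$, gives each vertex of $B_k$ that is isolated in the resulting edge set an independent uniform spin in $\{1,\dots,q\}$, and discards the edges; it is reversible w.r.t. $\pi(\cdot\mid\tau)$. $\lambda(P)=1-\max\{|\lambda_2|,|\lambda_N|\}$ for reversible $P$ with eigenvalues $1=\lambda_1\ge\dots\ge\lambda_N$. *)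

theory Defs
  imports "Jordan_Normal_Form.Char_Poly" "HOL-Library.Multiset"
begin

type_synonym vtx = "nat \<Rightarrow> int"   (* points of Z^d: coordinates i < d, zero for i >= d *)
type_synonym config = "vtx \<Rightarrow> nat"

definition cube :: "nat \<Rightarrow> vtx \<Rightarrow> nat \<Rightarrow> vtx set" where
  "cube d c n = {y. (\<forall>i<d. c i \<le> y i \<and> y i < c i + int n) \<and> (\<forall>i. d \<le> i \<longrightarrow> y i = 0)}"

definition adj :: "nat \<Rightarrow> vtx \<Rightarrow> vtx \<Rightarrow> bool" where
  "adj d u v \<longleftrightarrow> (\<Sum>i<d. \<bar>u i - v i\<bar>) = 1"

definition edges :: "nat \<Rightarrow> vtx set \<Rightarrow> vtx set set" where
  "edges d V = {{u, v} | u v. u \<in> V \<and> v \<in> V \<and> adj d u v}"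

definition block :: "nat \<Rightarrow> vtx set \<Rightarrow> nat \<Rightarrow> vtx \<Rightarrow> vtx set" where
  "block d V L x = V \<inter> (\<Union>h::vtx. {y. \<forall>i<d.
       \<bar>y i - (x i + int (L + 3) * h i)\<bar> \<le> int ((L - 1) div 2)})"

definition configs :: "vtx set \<Rightarrow> nat \<Rightarrow> config set" where
  "configs A q = {\<sigma>. (\<forall>v\<in>A. \<sigma> v \<in> {1..q}) \<and> (\<forall>v. v \<notin> A \<longrightarrow> \<sigma> v = 0)}"

definition glue :: "vtx set \<Rightarrow> config \<Rightarrow> config \<Rightarrow> config" where
  "glue B \<sigma> \<tau> = (\<lambda>v. if v \<in> B then \<sigma> v else \<tau> v)"

definition mono_edges :: "vtx set set \<Rightarrow> config \<Rightarrow> vtx set set" where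
  "mono_edges E \<eta> = {e \<in> E. \<exists>u v. e = {u, v} \<and> \<eta> u = \<eta> v}"

text \<open>Transition probability of the chain I_k^tau on configurations of B:
  choose a subset A of the monochromatic edges (each independently with prob. p),
  keep the spins of non-isolated vertices of B, resample the isolated ones uniformly.\<close>
definition I_kernel :: "nat \<Rightarrow> vtx set \<Rightarrow> nat \<Rightarrow> real \<Rightarrow> vtx set \<Rightarrow> config \<Rightarrow> config \<Rightarrow> config \<Rightarrow> real" where
  "I_kernel d V q \<beta> B \<tau> \<sigma> \<sigma>' =
     (let p = 1 - exp (- \<beta>); M = mono_edges (edges d V) (glue B \<sigma> \<tau>) in
      \<Sum>A\<in>Pow M. p ^ card A * (1 - p) ^ (card M - card A) *
        (if (\<forall>v\<in>B. v \<in> \<Union>A \<longrightarrow> \<sigma>' v = \<sigma> v)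
         then (1 / real q) ^ card {v \<in> B. v \<notin> \<Union>A} else 0))"

definition enum_states :: "'s set \<Rightarrow> nat \<Rightarrow> 's" where
  "enum_states S = (SOME f. bij_betw f {0..<card S} S)"

definition kernel_mat :: "'s set \<Rightarrow> ('s \<Rightarrow> 's \<Rightarrow> real) \<Rightarrow> real mat" where
  "kernel_mat S P = mat (card S) (card S) (\<lambda>(i, j). P (enum_states S i) (enum_states S j))"

text \<open>Eigenvalues with multiplicity, in non-increasing order lambda_1 >= ... >= lambda_N
  (for a reversible P all eigenvalues are real).\<close>
definition eigs_desc :: "real mat \<Rightarrow> real list" where
  "eigs_desc A = rev (sorted_list_of_multiset (proots (char_poly A)))"

definition spectral_gap :: "'s set \<Rightarrow> ('s \<Rightarrow> 's \<Rightarrow> real) \<Rightarrow> real" where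
  "spectral_gap S P = (let ev = eigs_desc (kernel_mat S P) in
      1 - max \<bar>ev ! 1\<bar> \<bar>last ev\<bar>)"

end

theory Submission
  imports Defs "Jordan_Normal_Form.Schur_Decomposition"
begin

text \<open>The block is a union of tiles, cubes of side \<open>L\<close> no two of which are joined by an edge.
  Let \<open>osc f\<close> be the largest change of \<open>f\<close> between two configurations that differ on a single
  tile. Starting the chain from two such configurations, the monochromatic edges away from that
  tile coincide, so both steps can keep the same edges there. With probability at least
  \<open>(1 - p) ^ (2 d L ^ d) = exp (- 2 \<beta> d L ^ d)\<close> no edge touching the tile is kept; then
  every vertex of the tile is resampled uniformly and the two steps have the same law. Hence
  one step contracts \<open>osc\<close> by the factor \<open>1 - exp (- 2 \<beta> d L ^ d)\<close>. Applied to an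
  eigenfunction with eigenvalue \<open>\<lambda> \<noteq> 1\<close> this bounds \<open>\<bar>\<lambda>\<bar>\<close>, and for \<open>\<lambda> = 1\<close> it makes the eigenfunction constant.
  Reversibility makes the spectrum real, and constancy of harmonic functions makes \<open>1\<close> a simple
  eigenvalue (through a Schur decomposition), so the bound holds even without the factor
  \<open>1/7\<close>.\<close>

section \<open>Spectra of reversible stochastic matrices\<close>

interpretation of_real_poly_hom: map_poly_comm_ring_hom "of_real :: real \<Rightarrow> complex" ..

lemma monic_real_poly_splits:
  fixes p :: "real poly"
  assumes "lead_coeff p = 1"
  and "\<And>z. poly (map_poly complex_of_real p) z = 0 \<Longrightarrow> Im z = 0"
  shows "\<exists>es. p = (\<Prod>e\<leftarrow>es. [:-e,1:])"
  using assms
proof (induct "degree p" arbitrary: p)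
  case 0
  then show ?case by (intro exI[of _ "[]"]) (auto elim!: degree_eq_zeroE)
next
  case (Suc n p)
  let ?q = "map_poly complex_of_real p"
  have "degree ?q = Suc n" using Suc(2) by simp
  then have "\<not> constant (poly ?q)" by (simp add: constant_degree)
  from fundamental_theorem_of_algebra[OF this] obtain z where z: "poly ?q z = 0" by auto
  have "Im z = 0" using Suc(4)[OF z] .
  then have zr: "z = complex_of_real (Re z)" by (simp add: complex_eq_iff)
  have "poly p (Re z) = 0" using z zr
    by (metis of_real_eq_0_iff of_real_hom.poly_map_poly)
  then have "[:-Re z,1 :] dvd p" by (simp add: dvd_iff_poly_eq_0)
  then obtain r where p: "p = [:-Re z,1 :] * r" by (metis dvd_def)
  have r0: "r \<noteq> 0" using Suc(2) p by auto
  have "degree p = degree [:-Re z,1 :] + degree r" unfolding p by (rule degree_mult_eq) (use r0 in auto)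
  then have dr: "degree r = n" using Suc(2) by simp
  have "lead_coeff p = lead_coeff [:-Re z,1 :] * lead_coeff r" unfolding p by (rule lead_coeff_mult)
  then have lr: "lead_coeff r = 1" using Suc(3) by simp
  have "\<And>w. poly (map_poly complex_of_real r) w = 0 \<Longrightarrow> Im w = 0"
  proof -
    fix w assume "poly (map_poly complex_of_real r) w = 0"
    moreover have "map_poly complex_of_real p = map_poly complex_of_real [:-Re z,1 :] * map_poly complex_of_real r"
      unfolding p by (rule of_real_poly_hom.hom_mult)
    ultimately have "poly ?q w = 0" by simp
    then show "Im w = 0" by (rule Suc(4))
  qed
  from Suc(1)[OF dr[symmetric] lr this] obtain es where "r = (\<Prod>e\<leftarrow>es. [:-e,1:])" by auto
  then show ?case unfolding p by (intro exI[of _ "Re z # es"]) auto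
qed

lemma proots_linear_factors:
  fixes es :: "'a::idom list"
  shows "proots (\<Prod>e\<leftarrow>es. [:-e,1:]) = mset es"
proof (induction es)
  case (Cons e es)
  have "(\<Prod>e\<leftarrow>es. [:-e,1:]) \<noteq> 0" by (auto simp: prod_list_zero_iff)
  with Cons show ?case by (simp del: mult_pCons_left add: proots_mult)
qed simp

lemma degree_linear_factors:
  fixes es :: "'a::idom list"
  shows "degree (\<Prod>e\<leftarrow>es. [:-e,1:]) = length es"
proof (induction es)
  case (Cons e es)
  have "(\<Prod>e\<leftarrow>es. [:-e,1:]) \<noteq> 0" by (auto simp: prod_list_zero_iff)
  with Cons show ?case by (simp del: mult_pCons_left add: degree_mult_eq)
qed simp

lemma mset_two_copies:
  assumes "2 \<le> count (mset xs) a"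
  obtains ys where "mset xs = mset (a # a # ys)"
proof
  show "mset xs = mset (a # a # remove1 a (remove1 a xs))"
    using assms by (intro multiset_eqI) auto
qed

lemma index_mult_mat_vec_sum:
  assumes "A \<in> carrier_mat N N" and "v \<in> carrier_vec N" and "i < N"
  shows "(A *\<^sub>v v) $ i = (\<Sum>k<N. A$$(i,k) * v$k)"
  using assms by (auto simp: mult_mat_vec_def scalar_prod_def lessThan_atLeast0 intro!: sum.cong)

lemma index_mat_mult_sum:
  assumes "X \<in> carrier_mat N N" and "Y \<in> carrier_mat N N" and "i < N" and "j < N"
  shows "(X * Y) $$ (i,j) = (\<Sum>k<N. X$$(i,k) * Y$$(k,j))"
  using assms by (auto simp: times_mat_def scalar_prod_def lessThan_atLeast0 intro!: sum.cong)

lemma weighted_sq_norm_pos: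
  fixes v :: "complex vec"
  assumes "v \<in> carrier_vec N" and "v \<noteq> 0\<^sub>v N" and pos: "\<And>i. i < N \<Longrightarrow> \<pi> i > 0"
  shows "(\<Sum>i<N. \<pi> i * (cmod (v$i))^2) > 0"
proof -
  obtain k where k: "k < N" "v$k \<noteq> 0" using assms(1,2) by (metis carrier_vecD eq_vecI index_zero_vec)
  have "0 < \<pi> k * (cmod (v$k))^2" using pos k by simp
  also have "\<dots> \<le> (\<Sum>i<N. \<pi> i * (cmod (v$i))^2)"
  proof (rule member_le_sum)
    fix i assume "i \<in> {..<N} - {k}"
    then have "\<pi> i > 0" using pos by auto
    then show "0 \<le> \<pi> i * (cmod (v$i))^2" by simp
  qed (use k in auto)
  finally show ?thesis .
qed

text \<open>For a reversible matrix the Hermitian form \<open>\<Sum>i j. \<pi> i A\<^sub>i\<^sub>j conj(v\<^sub>i) v\<^sub>j\<close> is real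
  and equals \<open>z \<Sum>i. \<pi> i |v\<^sub>i|\<^sup>2\<close> for an eigenvector \<open>v\<close>.\<close>
lemma reversible_char_poly_roots_real:
  fixes A :: "real mat" and \<pi> :: "nat \<Rightarrow> real"
  assumes A: "A \<in> carrier_mat N N"
  and pos: "\<And>i. i < N \<Longrightarrow> \<pi> i > 0"
  and rev: "\<And>i j. i < N \<Longrightarrow> j < N \<Longrightarrow> \<pi> i * A$$(i,j) = \<pi> j * A$$(j,i)"
  and root: "poly (char_poly (map_mat complex_of_real A)) z = 0"
  shows "Im z = 0"
proof -
  let ?A = "map_mat complex_of_real A"
  have Ac: "?A \<in> carrier_mat N N" using A by simp
  have "eigenvalue ?A z" using root eigenvalue_root_char_poly[OF Ac] by simp
  then obtain v where ev: "eigenvector ?A v z" unfolding eigenvalue_def by auto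
  then have v: "v \<in> carrier_vec N" "v \<noteq> 0\<^sub>v N" "?A *\<^sub>v v = z \<cdot>\<^sub>v v"
    unfolding eigenvector_def using Ac by auto
  have eq: "(\<Sum>j<N. of_real (A$$(i,j)) * v$j) = z * v$i" if i: "i < N" for i
  proof -
    have "(?A *\<^sub>v v) $ i = z * v$i" using v(3) i v(1) by simp
    moreover have "(?A *\<^sub>v v) $ i = (\<Sum>j<N. of_real (A$$(i,j)) * v$j)"
      using i A v(1) by (auto simp: mult_mat_vec_def scalar_prod_def lessThan_atLeast0 intro!: sum.cong)
    ultimately show ?thesis by simp
  qed
  define T where "T = (\<Sum>i<N. \<Sum>j<N. complex_of_real (\<pi> i * A$$(i,j)) * cnj (v$i) * v$j)"
  define W where "W = (\<Sum>i<N. \<pi> i * (cmod (v$i))^2)"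
  have T1: "T = z * of_real W"
  proof -
    have "T = (\<Sum>i<N. of_real (\<pi> i) * cnj (v$i) * (\<Sum>j<N. of_real (A$$(i,j)) * v$j))"
      unfolding T_def by (auto simp: sum_distrib_left intro!: sum.cong simp: algebra_simps)
    also have "\<dots> = (\<Sum>i<N. of_real (\<pi> i) * cnj (v$i) * (z * v$i))"
      by (intro sum.cong refl) (simp add: eq)
    also have "\<dots> = z * (\<Sum>i<N. of_real (\<pi> i) * (cnj (v$i) * v$i))"
      by (simp add: sum_distrib_left algebra_simps)
    also have "\<dots> = z * of_real W"
      unfolding W_def of_real_sum by (intro arg_cong[where f="\<lambda>x. z * x"] sum.cong refl) (simp add: complex_norm_square[symmetric] mult.commute)
    finally show ?thesis .
  qed
  have T2: "cnj T = T"
  proof -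
    have "cnj T = (\<Sum>i<N. \<Sum>j<N. complex_of_real (\<pi> i * A$$(i,j)) * v$i * cnj (v$j))"
      unfolding T_def by (simp add: mult.commute)
    also have "\<dots> = (\<Sum>j<N. \<Sum>i<N. complex_of_real (\<pi> i * A$$(i,j)) * v$i * cnj (v$j))"
      by (rule sum.swap)
    also have "\<dots> = T" unfolding T_def
      by (intro sum.cong refl) (simp add: rev algebra_simps)
    finally show ?thesis .
  qed
  have "W > 0" unfolding W_def by (rule weighted_sq_norm_pos[OF v(1,2) pos])
  moreover from T1 T2 have "cnj z * of_real W = z * of_real W" by (metis complex_cnj_mult complex_cnj_complex_of_real)
  ultimately have "cnj z = z" by simp
  then show ?thesis by (metis Reals_cnj_iff complex_is_Real_iff)
qed

lemma reversible_char_poly_linear_factors: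
  fixes A :: "real mat" and \<pi> :: "nat \<Rightarrow> real"
  assumes A: "A \<in> carrier_mat N N"
    and pos: "\<And>i. i < N \<Longrightarrow> \<pi> i > 0"
    and rev: "\<And>i j. i < N \<Longrightarrow> j < N \<Longrightarrow> \<pi> i * A$$(i,j) = \<pi> j * A$$(j,i)"
  obtains es where "char_poly A = (\<Prod>e\<leftarrow>es. [:-e,1:])" and "length es = N"
proof -
  have monic: "degree (char_poly A) = N \<and> coeff (char_poly A) N = 1"
    by (rule degree_monic_char_poly[OF A])
  have "\<exists>es. char_poly A = (\<Prod>e\<leftarrow>es. [:-e,1:])"
  proof (rule monic_real_poly_splits)
    show "lead_coeff (char_poly A) = 1" using monic by simp
    fix z assume "poly (map_poly complex_of_real (char_poly A)) z = 0"
    then show "Im z = 0"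
      using reversible_char_poly_roots_real[OF A pos rev] of_real_hom.char_poly_hom[OF A] by metis
  qed
  then obtain es where es: "char_poly A = (\<Prod>e\<leftarrow>es. [:-e,1:])" by blast
  moreover have "length es = N" using monic degree_linear_factors[of es] es by simp
  ultimately show thesis by (rule that)
qed

lemma eigs_desc_linear_factors:
  assumes "char_poly A = (\<Prod>e\<leftarrow>es. [:-e,1:])"
  shows "eigs_desc A = rev (sort es)"
  unfolding eigs_desc_def assms proots_linear_factors by (simp add: sorted_list_of_multiset_mset)

lemma stochastic_drift_nonpos:
  fixes A :: "real mat"
  assumes nn: "\<And>i k. i < N \<Longrightarrow> k < N \<Longrightarrow> A$$(i,k) \<ge> 0"
    and rs: "\<And>i. i < N \<Longrightarrow> (\<Sum>k<N. A$$(i,k)) = 1"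
    and N: "N > 0"
    and drift: "\<And>i. i < N \<Longrightarrow> (\<Sum>k<N. A$$(i,k) * g k) \<ge> g i + c"
  shows "c \<le> 0"
proof -
  have "Max (g ` {..<N}) \<in> g ` {..<N}" using N by (intro Max_in) auto
  then obtain i0 where i0: "i0 < N" "g i0 = Max (g ` {..<N})" by auto
  have "g i0 + c \<le> (\<Sum>k<N. A$$(i0,k) * g k)" by (rule drift[OF i0(1)])
  also have "\<dots> \<le> (\<Sum>k<N. A$$(i0,k) * g i0)"
    by (intro sum_mono mult_left_mono) (use i0 nn in auto)
  also have "\<dots> = g i0" using rs[of i0] i0 by (simp add: sum_distrib_right[symmetric])
  finally show ?thesis by simp
qed

lemma stochastic_drift_zero:
  fixes A :: "real mat"
  assumes nn: "\<And>i k. i < N \<Longrightarrow> k < N \<Longrightarrow> A$$(i,k) \<ge> 0"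
    and rs: "\<And>i. i < N \<Longrightarrow> (\<Sum>k<N. A$$(i,k)) = 1"
    and N: "N > 0"
    and drift: "\<And>i. i < N \<Longrightarrow> (\<Sum>k<N. A$$(i,k) * g k) = g i + c"
  shows "c = 0"
proof -
  have "c \<le> 0" by (rule stochastic_drift_nonpos[OF nn rs N, of g]) (use drift in auto)
  moreover have "- c \<le> 0"
    by (rule stochastic_drift_nonpos[OF nn rs N, of "\<lambda>k. - g k"]) (use drift in \<open>auto simp: sum_negf\<close>)
  ultimately show ?thesis by simp
qed

lemma upper_triangular_similar_first_columns:
  assumes A: "A \<in> carrier_mat N N" and N: "N \<ge> 2"
    and sim: "similar_mat_wit A B P Q" and ut: "upper_triangular B"
    and B00: "B$$(0,0) = 1" and B11: "B$$(1,1) = 1" and i: "i < N"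
  shows "(\<Sum>k<N. A$$(i,k) * P$$(k,0)) = P$$(i,0)"
    and "(\<Sum>k<N. A$$(i,k) * P$$(k,1)) = P$$(i,0) * B$$(0,1) + P$$(i,1)"
proof -
  from sim A have Bc: "B \<in> carrier_mat N N" and Pc: "P \<in> carrier_mat N N" and Qc: "Q \<in> carrier_mat N N"
    and QP: "Q * P = 1\<^sub>m N" and AB: "A = P * B * Q"
    unfolding similar_mat_wit_def Let_def by auto
  have "A * P = P * B * Q * P" using AB by simp
  also have "\<dots> = P * B * (Q * P)" using Pc Bc Qc by (simp add: assoc_mult_mat[of _ N N _ N _ N])
  finally have AP: "A * P = P * B" using QP Pc Bc by simp
  have Blow: "B$$(k,j) = 0" if "k < N" "j < k" for k j
    using ut that Bc unfolding upper_triangular_def by auto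
  have col: "(\<Sum>k<N. A$$(i,k) * P$$(k,j)) = (\<Sum>k<N. P$$(i,k) * B$$(k,j))" if "j < N" for j
    using index_mat_mult_sum[OF A Pc i that] index_mat_mult_sum[OF Pc Bc i that] AP by simp
  have "(\<Sum>k<N. P$$(i,k) * B$$(k,0)) = (\<Sum>k<N. if k = 0 then P$$(i,0) else 0)"
    by (intro sum.cong refl) (auto simp: B00 Blow)
  then show "(\<Sum>k<N. A$$(i,k) * P$$(k,0)) = P$$(i,0)" using col[of 0] N by simp
  have "(\<Sum>k<N. P$$(i,k) * B$$(k,1)) =
      (\<Sum>k<N. (if k = 0 then P$$(i,0) * B$$(0,1) else 0) + (if k = 1 then P$$(i,1) else 0))"
  proof (intro sum.cong refl)
    fix k assume "k \<in> {..<N}"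
    then show "P$$(i,k) * B$$(k,1) = (if k = 0 then P$$(i,0) * B$$(0,1) else 0) + (if k = 1 then P$$(i,1) else 0)"
      by (cases "k = 0"; cases "k = 1") (auto simp: B11 B11[unfolded One_nat_def] Blow)
  qed
  then show "(\<Sum>k<N. A$$(i,k) * P$$(k,1)) = P$$(i,0) * B$$(0,1) + P$$(i,1)"
    using col[of 1] N by (simp add: sum.distrib)
qed

lemma left_inverse_columns_not_both_constant:
  fixes Q P :: "'a::field mat"
  assumes Qc: "Q \<in> carrier_mat N N" and Pc: "P \<in> carrier_mat N N" and QP: "Q * P = 1\<^sub>m N"
    and N: "N \<ge> 2" and P0: "\<And>i. i < N \<Longrightarrow> P$$(i,0) = c0" and P1: "\<And>i. i < N \<Longrightarrow> P$$(i,1) = c1"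
  shows False
proof -
  have QP_entry: "(\<Sum>k<N. Q$$(a,k)) * c = (if a = b then 1 else 0)"
    if "a < 2" "b < 2" "\<And>k. k < N \<Longrightarrow> P$$(k,b) = c" for a b c
  proof -
    have "(Q*P)$$(a,b) = (\<Sum>k<N. Q$$(a,k) * P$$(k,b))" using index_mat_mult_sum[OF Qc Pc] that N by simp
    moreover have "(Q*P)$$(a,b) = (if a = b then 1 else 0)" using QP that N by simp
    ultimately show ?thesis using that(3) by (simp add: sum_distrib_right)
  qed
  have "(\<Sum>k<N. Q$$(0,k)) * c0 = 1" using QP_entry[of 0 0 c0] P0 by auto
  then have "(\<Sum>k<N. Q$$(0,k)) \<noteq> 0" by auto
  moreover have "(\<Sum>k<N. Q$$(0,k)) * c1 = 0" using QP_entry[of 0 1 c1] P1 by auto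
  ultimately have "c1 = 0" by simp
  moreover have "(\<Sum>k<N. Q$$(1,k)) * c1 = 1" using QP_entry[of 1 1 c1] P1 by auto
  ultimately show False by simp
qed

text \<open>If two eigenvalues in the Schur form were \<open>1\<close>, the first two columns of the
  transformation would be a harmonic function and a function with constant drift; stochasticity
  forces the drift to vanish, so both columns are constant, contradicting invertibility.\<close>
lemma stochastic_eigenvalue_one_simple:
  fixes A :: "real mat"
  assumes A: "A \<in> carrier_mat N N"
    and nn: "\<And>i k. i < N \<Longrightarrow> k < N \<Longrightarrow> A$$(i,k) \<ge> 0"
    and rs: "\<And>i. i < N \<Longrightarrow> (\<Sum>k<N. A$$(i,k)) = 1"
    and harmonic_const: "\<And>g. (\<And>i. i < N \<Longrightarrow> (\<Sum>k<N. A$$(i,k) * g k) = g i) \<Longrightarrow> \<forall>i<N. \<forall>j<N. g i = g j"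
    and cp: "char_poly A = (\<Prod>e\<leftarrow>es. [:-e,1:])"
  shows "count (mset es) 1 \<le> 1"
proof (rule ccontr)
  assume "\<not> count (mset es) 1 \<le> 1"
  then have "2 \<le> count (mset es) 1" by simp
  then obtain rest where m: "mset es = mset (1 # 1 # rest)" by (rule mset_two_copies)
  have cp': "char_poly A = (\<Prod>e\<leftarrow>1 # 1 # rest. [:-e,1:])"
    unfolding cp by (simp only: prod_mset_prod_list[symmetric] mset_map m)
  obtain B P Q where BPQ: "schur_decomposition A (1 # 1 # rest) = (B,P,Q)"
    by (cases "schur_decomposition A (1 # 1 # rest)") auto
  from schur_decomposition[OF A cp' BPQ]
  have sim: "similar_mat_wit A B P Q" and ut: "upper_triangular B" and dg: "diag_mat B = 1 # 1 # rest"
    by auto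
  from sim A have Bc: "B \<in> carrier_mat N N" and Pc: "P \<in> carrier_mat N N" and Qc: "Q \<in> carrier_mat N N"
    and QP: "Q * P = 1\<^sub>m N"
    unfolding similar_mat_wit_def Let_def by auto
  have "length (diag_mat B) = N" using Bc by (simp add: diag_mat_def)
  then have N: "N \<ge> 2" using dg by auto
  have "B$$(0,0) = diag_mat B ! 0" "B$$(1,1) = diag_mat B ! 1"
    using N Bc by (simp_all add: diag_mat_def)
  then have "B$$(0,0) = 1" "B$$(1,1) = 1" unfolding dg by simp_all
  note cols = upper_triangular_similar_first_columns[OF A N sim ut this]
  have const0: "\<forall>i<N. \<forall>j<N. P$$(i,0) = P$$(j,0)" by (rule harmonic_const[of "\<lambda>k. P$$(k,0)"]) (rule cols(1))
  define c0 where "c0 = P$$(0,0)"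
  have N0: "0 < N" using N by simp
  have P0: "P$$(i,0) = c0" if "i < N" for i using const0 that N0 unfolding c0_def by blast
  have no_drift: "c0 * B$$(0,1) = 0"
  proof (rule stochastic_drift_zero[OF nn rs, of "\<lambda>k. P$$(k,1)"])
    show "(\<Sum>k<N. A$$(i,k) * P$$(k,1)) = P$$(i,1) + c0 * B$$(0,1)" if "i < N" for i
      using cols(2)[OF that] P0[OF that] by (simp add: add.commute)
  qed (use N0 in auto)
  have const1: "\<forall>i<N. \<forall>j<N. P$$(i,1) = P$$(j,1)"
  proof (rule harmonic_const[of "\<lambda>k. P$$(k,1)"])
    show "(\<Sum>k<N. A$$(i,k) * P$$(k,1)) = P$$(i,1)" if "i < N" for i
      using cols(2)[OF that] P0[OF that] no_drift by simp
  qed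
  define c1 where "c1 = P$$(0,1)"
  have P1: "P$$(i,1) = c1" if "i < N" for i using const1 that N0 unfolding c1_def by blast
  show False by (rule left_inverse_columns_not_both_constant[OF Qc Pc QP N P0 P1])
qed

lemma stochastic_eigenvalue_one:
  fixes A :: "real mat"
  assumes A: "A \<in> carrier_mat N N" and N: "N > 0"
    and rs: "\<And>i. i < N \<Longrightarrow> (\<Sum>k<N. A$$(i,k)) = 1"
  shows "eigenvalue A 1"
proof -
  let ?one = "vec N (\<lambda>_. 1::real)"
  have "(A *\<^sub>v ?one) $ i = 1" if "i < N" for i
  proof -
    have "(A *\<^sub>v ?one) $ i = (\<Sum>k<N. A$$(i,k) * ?one $ k)"
      using index_mult_mat_vec_sum[OF A _ that] by simp
    also have "\<dots> = (\<Sum>k<N. A$$(i,k))" by (intro sum.cong) auto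
    finally show ?thesis using rs[OF that] by simp
  qed
  then have "A *\<^sub>v ?one = 1 \<cdot>\<^sub>v ?one" using A by (intro eq_vecI) auto
  moreover have "?one \<noteq> 0\<^sub>v N"
  proof
    assume "?one = 0\<^sub>v N"
    then have "?one $ 0 = 0\<^sub>v N $ 0" by simp
    then show False using N by simp
  qed
  ultimately show ?thesis
    unfolding eigenvalue_def eigenvector_def using A by (intro exI[of _ ?one]) auto
qed

lemma descending_second_and_last_bounded:
  fixes es :: "real list"
  assumes len: "length es \<ge> 2" and one: "count (mset es) 1 = 1"
    and bnd: "\<And>e. e \<in> set es \<Longrightarrow> e \<noteq> 1 \<Longrightarrow> \<bar>e\<bar> \<le> b" and b: "b < 1"
  shows "\<bar>rev (sort es) ! 1\<bar> \<le> b \<and> \<bar>last (rev (sort es))\<bar> \<le> b"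
proof -
  define ys where "ys = sorted_list_of_multiset (mset es - {#1#})"
  have "1 \<in># mset es" by (rule count_inI) (simp add: one)
  then have mes: "mset es = add_mset 1 (mset ys)" unfolding ys_def by simp
  then have "count (mset ys) 1 = 0" using one by simp
  then have "1 \<notin> set ys" by (simp add: count_mset_0_iff)
  moreover have "set es = insert 1 (set ys)" using mes by (metis set_mset_add_mset_insert set_mset_mset)
  ultimately have ys_bnd: "\<bar>y\<bar> \<le> b" if "y \<in> set ys" for y
    using bnd[of y] that by auto
  have "sort es = ys @ [1]"
  proof (rule properties_for_sort)
    show "mset (ys @ [1]) = mset es" using mes by simp
    show "sorted (ys @ [1])"
      using ys_bnd b by (fastforce simp: sorted_append ys_def abs_le_iff)
  qed
  moreover have "length es = Suc (length ys)" using mes by (metis size_add_mset size_mset)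
  then have "ys \<noteq> []" using len by auto
  ultimately show ?thesis
    using ys_bnd by (simp add: hd_conv_nth[symmetric] hd_rev last_rev)
qed

lemma reversible_stochastic_mat_gap:
  fixes A :: "real mat" and \<epsilon> :: real and \<pi> :: "nat \<Rightarrow> real"
  assumes A: "A \<in> carrier_mat N N" and N: "N \<ge> 2" and eps: "\<epsilon> > 0"
    and nn: "\<And>i k. i < N \<Longrightarrow> k < N \<Longrightarrow> A$$(i,k) \<ge> 0"
    and rs: "\<And>i. i < N \<Longrightarrow> (\<Sum>k<N. A$$(i,k)) = 1"
    and pos: "\<And>i. i < N \<Longrightarrow> \<pi> i > 0"
    and rev: "\<And>i j. i < N \<Longrightarrow> j < N \<Longrightarrow> \<pi> i * A$$(i,j) = \<pi> j * A$$(j,i)"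
    and harmonic_const: "\<And>g. (\<And>i. i < N \<Longrightarrow> (\<Sum>k<N. A$$(i,k) * g k) = g i) \<Longrightarrow> \<forall>i<N. \<forall>j<N. g i = g j"
    and eig_bound: "\<And>g l. (\<And>i. i < N \<Longrightarrow> (\<Sum>k<N. A$$(i,k) * g k) = l * g i) \<Longrightarrow> l \<noteq> 1 \<Longrightarrow>
      (\<exists>i<N. g i \<noteq> 0) \<Longrightarrow> \<bar>l\<bar> \<le> 1 - \<epsilon>"
  shows "\<epsilon> \<le> 1 - max \<bar>eigs_desc A ! 1\<bar> \<bar>last (eigs_desc A)\<bar>"
proof -
  obtain es where cp: "char_poly A = (\<Prod>e\<leftarrow>es. [:-e,1:])" and len: "length es = N"
    using reversible_char_poly_linear_factors[OF A pos rev] .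
  have cp0: "char_poly A \<noteq> 0" using degree_monic_char_poly[OF A] by auto
  have root: "poly (char_poly A) e = 0 \<longleftrightarrow> e \<in> set es" for e
    using set_count_proots[OF cp0] unfolding cp proots_linear_factors by auto
  have eigvec: "\<exists>v. v \<in> carrier_vec N \<and> v \<noteq> 0\<^sub>v N \<and> A *\<^sub>v v = e \<cdot>\<^sub>v v" if "e \<in> set es" for e
    using eigenvalue_root_char_poly[OF A, of e] root[of e] that A
    unfolding eigenvalue_def eigenvector_def by auto
  have bnd: "\<bar>e\<bar> \<le> 1 - \<epsilon>" if e: "e \<in> set es" "e \<noteq> 1" for e
  proof -
    obtain v where v: "v \<in> carrier_vec N" "v \<noteq> 0\<^sub>v N" "A *\<^sub>v v = e \<cdot>\<^sub>v v" using eigvec[OF e(1)] by blast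
    show ?thesis
    proof (rule eig_bound[of "\<lambda>k. v$k"])
      show "(\<Sum>k<N. A$$(i,k) * v$k) = e * v$i" if "i < N" for i
        using index_mult_mat_vec_sum[OF A v(1) that] v(3) that v(1) by simp
      show "\<exists>i<N. v$i \<noteq> 0" using v(1,2) by (metis carrier_vecD eq_vecI index_zero_vec)
    qed (use e in auto)
  qed
  have "eigenvalue A 1" using stochastic_eigenvalue_one[OF A _ rs] N by simp
  then have "1 \<in> set es" using eigenvalue_root_char_poly[OF A] root by simp
  moreover have "count (mset es) 1 \<le> 1"
    by (rule stochastic_eigenvalue_one_simple[OF A nn rs harmonic_const cp])
  ultimately have "count (mset es) 1 = 1" by (simp add: Suc_le_eq antisym)
  then show ?thesis
    using descending_second_and_last_bounded[of es "1 - \<epsilon>"] len N bnd eps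
    unfolding eigs_desc_linear_factors[OF cp] by (auto simp: max_def)
qed


section \<open>Kernels on finite state spaces\<close>

lemma enum_states_bij:
  assumes "finite S"
  shows "bij_betw (enum_states S) {0..<card S} S"
  unfolding enum_states_def by (rule someI_ex[OF ex_bij_betw_nat_finite[OF assms]])

lemma sum_enum_states:
  assumes "finite S"
  shows "(\<Sum>k<card S. g (enum_states S k)) = (\<Sum>\<sigma>\<in>S. g \<sigma>)"
  unfolding lessThan_atLeast0 by (rule sum.reindex_bij_betw[OF enum_states_bij[OF assms]])

lemma kernel_mat_index:
  assumes "i < card S" and "j < card S"
  shows "kernel_mat S P $$ (i,j) = P (enum_states S i) (enum_states S j)"
  using assms unfolding kernel_mat_def by simp

lemma kernel_mat_eigenfunction:
  fixes P :: "'s \<Rightarrow> 's \<Rightarrow> real"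
  assumes fin: "finite S"
    and ev: "\<And>i. i < card S \<Longrightarrow> (\<Sum>k<card S. kernel_mat S P $$ (i,k) * g k) = l * g i"
  obtains f where "\<And>\<sigma>. \<sigma> \<in> S \<Longrightarrow> (\<Sum>\<sigma>'\<in>S. P \<sigma> \<sigma>' * f \<sigma>') = l * f \<sigma>"
    and "\<And>i. i < card S \<Longrightarrow> f (enum_states S i) = g i"
proof -
  let ?idx = "inv_into {0..<card S} (enum_states S)"
  note bij = enum_states_bij[OF fin]
  have idx_enum: "?idx (enum_states S k) = k" if "k < card S" for k
    using bij_betw_inv_into_left[OF bij] that by simp
  have "(\<Sum>\<sigma>'\<in>S. P \<sigma> \<sigma>' * g (?idx \<sigma>')) = l * g (?idx \<sigma>)" if \<sigma>: "\<sigma> \<in> S" for \<sigma>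
  proof -
    have i: "?idx \<sigma> < card S" "enum_states S (?idx \<sigma>) = \<sigma>"
      using bij_betw_inv_into_right[OF bij \<sigma>] bij_betw_apply[OF bij_betw_inv_into[OF bij] \<sigma>] by auto
    have "(\<Sum>\<sigma>'\<in>S. P \<sigma> \<sigma>' * g (?idx \<sigma>')) =
        (\<Sum>k<card S. P \<sigma> (enum_states S k) * g (?idx (enum_states S k)))"
      by (rule sum_enum_states[OF fin, symmetric])
    also have "\<dots> = (\<Sum>k<card S. kernel_mat S P $$ (?idx \<sigma>, k) * g k)"
      using i by (intro sum.cong refl) (simp add: kernel_mat_index idx_enum)
    also have "\<dots> = l * g (?idx \<sigma>)" by (rule ev[OF i(1)])
    finally show ?thesis .
  qed
  moreover have "g (?idx (enum_states S i)) = g i" if "i < card S" for i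
    using idx_enum[OF that] by simp
  ultimately show thesis by (rule that[of "\<lambda>\<sigma>. g (?idx \<sigma>)"])
qed

lemma reversible_kernel_spectral_gap:
  fixes P :: "'s \<Rightarrow> 's \<Rightarrow> real" and \<pi> :: "'s \<Rightarrow> real"
  assumes fin: "finite S" and card: "card S \<ge> 2" and eps: "\<epsilon> > 0"
    and nn: "\<And>\<sigma> \<sigma>'. 0 \<le> P \<sigma> \<sigma>'"
    and rs: "\<And>\<sigma>. \<sigma> \<in> S \<Longrightarrow> (\<Sum>\<sigma>'\<in>S. P \<sigma> \<sigma>') = 1"
    and pos: "\<And>\<sigma>. \<pi> \<sigma> > 0"
    and rev: "\<And>\<sigma> \<sigma>'. \<pi> \<sigma> * P \<sigma> \<sigma>' = \<pi> \<sigma>' * P \<sigma>' \<sigma>"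
    and harmonic_const: "\<And>f. (\<And>\<sigma>. \<sigma> \<in> S \<Longrightarrow> (\<Sum>\<sigma>'\<in>S. P \<sigma> \<sigma>' * f \<sigma>') = f \<sigma>) \<Longrightarrow>
      \<forall>\<sigma>\<in>S. \<forall>\<sigma>'\<in>S. f \<sigma> = f \<sigma>'"
    and eig_bound: "\<And>f l. (\<And>\<sigma>. \<sigma> \<in> S \<Longrightarrow> (\<Sum>\<sigma>'\<in>S. P \<sigma> \<sigma>' * f \<sigma>') = l * f \<sigma>) \<Longrightarrow> l \<noteq> 1 \<Longrightarrow>
      \<exists>\<sigma>\<in>S. f \<sigma> \<noteq> 0 \<Longrightarrow> \<bar>l\<bar> \<le> 1 - \<epsilon>"
  shows "\<epsilon> \<le> spectral_gap S P"
proof -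
  let ?N = "card S" and ?e = "enum_states S" and ?A = "kernel_mat S P"
  have eS: "?e i \<in> S" if "i < ?N" for i using enum_states_bij[OF fin] that by (auto simp: bij_betw_def)
  have Aij: "?A $$ (i,j) = P (?e i) (?e j)" if "i < ?N" "j < ?N" for i j
    using that by (rule kernel_mat_index)
  have "\<epsilon> \<le> 1 - max \<bar>eigs_desc ?A ! 1\<bar> \<bar>last (eigs_desc ?A)\<bar>"
  proof (rule reversible_stochastic_mat_gap[OF _ card eps, where \<pi> = "\<lambda>i. \<pi> (?e i)"])
    show "?A \<in> carrier_mat ?N ?N" unfolding kernel_mat_def by simp
    show "\<And>i k. i < ?N \<Longrightarrow> k < ?N \<Longrightarrow> 0 \<le> ?A $$ (i,k)" by (simp add: Aij nn)
    show "(\<Sum>k<?N. ?A $$ (i,k)) = 1" if "i < ?N" for i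
      using that rs[OF eS[OF that]] sum_enum_states[OF fin, of "P (?e i)"] by (simp add: Aij)
    show "\<And>i. i < ?N \<Longrightarrow> 0 < \<pi> (?e i)" by (rule pos)
    show "\<And>i j. i < ?N \<Longrightarrow> j < ?N \<Longrightarrow> \<pi> (?e i) * ?A $$ (i,j) = \<pi> (?e j) * ?A $$ (j,i)"
      by (simp add: Aij rev)
    show "\<forall>i<?N. \<forall>j<?N. g i = g j" if "\<And>i. i < ?N \<Longrightarrow> (\<Sum>k<?N. ?A $$ (i,k) * g k) = g i" for g
    proof -
      have ev: "\<And>i. i < ?N \<Longrightarrow> (\<Sum>k<?N. ?A $$ (i,k) * g k) = 1 * g i" using that by simp
      obtain f where f: "\<And>\<sigma>. \<sigma> \<in> S \<Longrightarrow> (\<Sum>\<sigma>'\<in>S. P \<sigma> \<sigma>' * f \<sigma>') = 1 * f \<sigma>"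
        and fg: "\<And>i. i < ?N \<Longrightarrow> f (?e i) = g i"
        using kernel_mat_eigenfunction[OF fin ev] by blast
      have c: "\<forall>\<sigma>\<in>S. \<forall>\<sigma>'\<in>S. f \<sigma> = f \<sigma>'" by (rule harmonic_const) (use f in simp)
      show ?thesis
      proof (intro allI impI)
        fix i j assume ij: "i < ?N" "j < ?N"
        then have "f (?e i) = f (?e j)" using c eS by blast
        then show "g i = g j" using fg ij by simp
      qed
    qed
    show "\<bar>l\<bar> \<le> 1 - \<epsilon>" if ev: "\<And>i. i < ?N \<Longrightarrow> (\<Sum>k<?N. ?A $$ (i,k) * g k) = l * g i"
      and l: "l \<noteq> 1" and nz: "\<exists>i<?N. g i \<noteq> 0" for g l
    proof -
      obtain f where f: "\<And>\<sigma>. \<sigma> \<in> S \<Longrightarrow> (\<Sum>\<sigma>'\<in>S. P \<sigma> \<sigma>' * f \<sigma>') = l * f \<sigma>"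
        and fg: "\<And>i. i < ?N \<Longrightarrow> f (?e i) = g i"
        using kernel_mat_eigenfunction[OF fin ev] by blast
      obtain i where i: "i < ?N" "g i \<noteq> 0" using nz by blast
      then have "f (?e i) \<noteq> 0" using fg by simp
      then have "\<exists>\<sigma>\<in>S. f \<sigma> \<noteq> 0" using eS[OF i(1)] by blast
      then show ?thesis using f l by (rule eig_bound[rotated 2])
    qed
  qed
  then show ?thesis unfolding spectral_gap_def Let_def .
qed

section \<open>Spin configurations\<close>

text \<open>On configurations with disjoint supports the pointwise sum is the union.\<close>
definition config_union :: "config \<Rightarrow> config \<Rightarrow> config" where
  "config_union \<alpha> \<beta> = (\<lambda>v. \<alpha> v + \<beta> v)"

definition config_restrict :: "config \<Rightarrow> vtx set \<Rightarrow> config" where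
  "config_restrict \<sigma> X = (\<lambda>v. if v \<in> X then \<sigma> v else 0)"

lemma configs_Un_bij:
  assumes "X \<inter> Y = {}"
  shows "bij_betw (\<lambda>(\<alpha>,\<beta>). config_union \<alpha> \<beta>) (configs X q \<times> configs Y q) (configs (X \<union> Y) q)"
proof (rule bij_betw_byWitness[where f' = "\<lambda>\<sigma>. (config_restrict \<sigma> X, config_restrict \<sigma> Y)"])
  show "\<forall>a\<in>configs X q \<times> configs Y q. (\<lambda>\<sigma>. (config_restrict \<sigma> X, config_restrict \<sigma> Y)) ((\<lambda>(\<alpha>, \<beta>). config_union \<alpha> \<beta>) a) = a"
    using assms by (auto simp: configs_def config_union_def config_restrict_def fun_eq_iff)
  show "\<forall>a'\<in>configs (X \<union> Y) q. (\<lambda>(\<alpha>, \<beta>). config_union \<alpha> \<beta>) ((\<lambda>\<sigma>. (config_restrict \<sigma> X, config_restrict \<sigma> Y)) a') = a'"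
    using assms by (auto simp: configs_def config_union_def config_restrict_def fun_eq_iff)
  show "(\<lambda>(\<alpha>, \<beta>). config_union \<alpha> \<beta>) ` (configs X q \<times> configs Y q) \<subseteq> configs (X \<union> Y) q"
    using assms by (auto simp: configs_def config_union_def)
  show "(\<lambda>\<sigma>. (config_restrict \<sigma> X, config_restrict \<sigma> Y)) ` configs (X \<union> Y) q \<subseteq> configs X q \<times> configs Y q"
    by (auto simp: configs_def config_restrict_def)
qed

lemma sum_configs_Un:
  assumes "X \<inter> Y = {}"
  shows "(\<Sum>\<sigma>\<in>configs (X \<union> Y) q. F \<sigma>) = (\<Sum>\<alpha>\<in>configs X q. \<Sum>\<beta>\<in>configs Y q. F (config_union \<alpha> \<beta>))"
proof -
  have "(\<Sum>\<sigma>\<in>configs (X \<union> Y) q. F \<sigma>) = (\<Sum>p\<in>configs X q \<times> configs Y q. F ((\<lambda>(\<alpha>,\<beta>). config_union \<alpha> \<beta>) p))"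
    by (rule sum.reindex_bij_betw[OF configs_Un_bij[OF assms], symmetric])
  also have "\<dots> = (\<Sum>\<alpha>\<in>configs X q. \<Sum>\<beta>\<in>configs Y q. F (config_union \<alpha> \<beta>))"
    by (simp add: sum.cartesian_product case_prod_unfold)
  finally show ?thesis by (simp add: case_prod_unfold)
qed

lemma card_configs:
  assumes "finite X"
  shows "card (configs X q) = q ^ card X"
proof -
  have bij: "bij_betw (\<lambda>f. \<lambda>v. if v \<in> X then f v else 0) (PiE X (\<lambda>_. {1..q})) (configs X q)"
  proof (rule bij_betw_byWitness[where f' = "\<lambda>\<sigma>. restrict \<sigma> X"])
    show "\<forall>a\<in>PiE X (\<lambda>_. {1..q}). restrict (\<lambda>v. if v \<in> X then a v else 0) X = a"
      by (auto simp: PiE_def extensional_def fun_eq_iff)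
    show "\<forall>a'\<in>configs X q. (\<lambda>v. if v \<in> X then restrict a' X v else 0) = a'"
      by (auto simp: configs_def fun_eq_iff)
    show "(\<lambda>f v. if v \<in> X then f v else 0) ` PiE X (\<lambda>_. {1..q}) \<subseteq> configs X q"
      by (auto simp: configs_def PiE_def Pi_def)
    show "(\<lambda>\<sigma>. restrict \<sigma> X) ` configs X q \<subseteq> PiE X (\<lambda>_. {1..q})"
      by (auto simp: configs_def)
  qed
  have "card (configs X q) = card (PiE X (\<lambda>_. {1..q}))" using bij_betw_same_card[OF bij] by simp
  also have "\<dots> = q ^ card X" using assms by (simp add: card_PiE)
  finally show ?thesis .
qed

lemma finite_configs: "finite X \<Longrightarrow> finite (configs X q)"
proof -
  assume "finite X"
  have "configs X q \<subseteq> (\<lambda>f. \<lambda>v. if v \<in> X then f v else 0) ` PiE X (\<lambda>_. {1..q})"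
  proof
    fix \<sigma> assume s: "\<sigma> \<in> configs X q"
    have "\<sigma> = (\<lambda>v. if v \<in> X then restrict \<sigma> X v else 0)" using s by (auto simp: configs_def fun_eq_iff)
    moreover have "restrict \<sigma> X \<in> PiE X (\<lambda>_. {1..q})" using s by (auto simp: configs_def)
    ultimately show "\<sigma> \<in> (\<lambda>f. \<lambda>v. if v \<in> X then f v else 0) ` PiE X (\<lambda>_. {1..q})" by blast
  qed
  then show ?thesis using \<open>finite X\<close> by (rule finite_subset[OF _ finite_imageI[OF finite_PiE]]) auto
qed

lemma sum_configs_agreeing:
  assumes fin: "finite X" and U: "U \<subseteq> X" and s0: "\<And>v. v \<in> U \<Longrightarrow> \<sigma>0 v \<in> {1..q}"
  shows "(\<Sum>\<kappa>\<in>configs X q. (if \<forall>v\<in>U. \<kappa> v = \<sigma>0 v then c else 0)) = c * real q ^ card (X - U)"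
proof -
  have XU: "X = U \<union> (X - U)" using U by auto
  have "(\<Sum>\<kappa>\<in>configs X q. (if \<forall>v\<in>U. \<kappa> v = \<sigma>0 v then c else 0))
      = (\<Sum>\<alpha>\<in>configs U q. \<Sum>\<beta>\<in>configs (X - U) q. (if \<forall>v\<in>U. config_union \<alpha> \<beta> v = \<sigma>0 v then c else 0))"
    by (subst XU, rule sum_configs_Un) auto
  also have "\<dots> = (\<Sum>\<alpha>\<in>configs U q. \<Sum>\<beta>\<in>configs (X - U) q. (if \<alpha> = config_restrict \<sigma>0 U then c else 0))"
  proof (intro sum.cong refl)
    fix \<alpha> \<beta> assume a: "\<alpha> \<in> configs U q" and b: "\<beta> \<in> configs (X - U) q"
    have "(\<forall>v\<in>U. config_union \<alpha> \<beta> v = \<sigma>0 v) \<longleftrightarrow> (\<forall>v\<in>U. \<alpha> v = \<sigma>0 v)"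
      using b by (auto simp: config_union_def configs_def)
    also have "\<dots> \<longleftrightarrow> \<alpha> = config_restrict \<sigma>0 U" using a by (auto simp: configs_def config_restrict_def fun_eq_iff)
    finally show "(if \<forall>v\<in>U. config_union \<alpha> \<beta> v = \<sigma>0 v then c else 0) = (if \<alpha> = config_restrict \<sigma>0 U then c else 0)" by simp
  qed
  also have "\<dots> = (\<Sum>\<alpha>\<in>configs U q. (if \<alpha> = config_restrict \<sigma>0 U then c * real (card (configs (X - U) q)) else 0))"
    by (intro sum.cong refl) simp
  also have "\<dots> = c * real (card (configs (X - U) q))"
  proof -
    have "config_restrict \<sigma>0 U \<in> configs U q" using s0 by (auto simp: configs_def config_restrict_def)
    moreover have "finite (configs U q)" using finite_configs[of U q] fin U finite_subset by blast
    ultimately show ?thesis by (simp add: sum.delta)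
  qed
  also have "\<dots> = c * real q ^ card (X - U)" using fin by (simp add: card_configs)
  finally show ?thesis .
qed

lemma sum_uniform_resample:
  assumes "finite X" and "q > 0" and "\<And>v. v \<in> X \<inter> U \<Longrightarrow> \<sigma> v \<in> {1..q}"
  shows "(\<Sum>\<kappa>\<in>configs X q. if \<forall>v\<in>X \<inter> U. \<kappa> v = \<sigma> v then (1 / real q) ^ card (X - U) else 0) = 1"
proof -
  have eq: "X - X \<inter> U = X - U" by auto
  have "(\<Sum>\<kappa>\<in>configs X q. if \<forall>v\<in>X \<inter> U. \<kappa> v = \<sigma> v then (1 / real q) ^ card (X - U) else 0)
      = (1 / real q) ^ card (X - U) * real q ^ card (X - U)"
    using sum_configs_agreeing[of X "X \<inter> U" \<sigma> q "(1 / real q) ^ card (X - U)",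
        OF assms(1) Int_lower1 assms(3)]
    unfolding eq .
  also have "\<dots> = 1" using assms(2) by (simp add: power_mult_distrib[symmetric])
  finally show ?thesis .
qed

lemma sum_Pow_Un:
  assumes "X \<inter> Y = {}"
  shows "(\<Sum>A\<in>Pow (X \<union> Y). g A) = (\<Sum>A1\<in>Pow X. \<Sum>A2\<in>Pow Y. g (A1 \<union> A2))"
proof -
  have bij: "bij_betw (\<lambda>(A1,A2). A1 \<union> A2) (Pow X \<times> Pow Y) (Pow (X \<union> Y))"
    by (rule bij_betw_byWitness[where f' = "\<lambda>A. (A \<inter> X, A \<inter> Y)"]) (use assms in auto)
  have "(\<Sum>A\<in>Pow (X \<union> Y). g A) = (\<Sum>p\<in>Pow X \<times> Pow Y. g ((\<lambda>(A1,A2). A1 \<union> A2) p))"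
    by (rule sum.reindex_bij_betw[OF bij, symmetric])
  also have "\<dots> = (\<Sum>A1\<in>Pow X. \<Sum>A2\<in>Pow Y. g (A1 \<union> A2))"
    by (simp add: sum.cartesian_product case_prod_unfold)
  finally show ?thesis .
qed

definition subset_prob :: "real \<Rightarrow> 'a set \<Rightarrow> 'a set \<Rightarrow> real" where
  "subset_prob p M A = p ^ card A * (1 - p) ^ (card M - card A)"

lemma subset_prob_Un:
  assumes "finite X" "finite Y" "X \<inter> Y = {}" "A1 \<subseteq> X" "A2 \<subseteq> Y"
  shows "subset_prob p (X \<union> Y) (A1 \<union> A2) = subset_prob p X A1 * subset_prob p Y A2"
proof -
  have c1: "card (X \<union> Y) = card X + card Y" using assms by (simp add: card_Un_disjoint)
  have c2: "card (A1 \<union> A2) = card A1 + card A2" using assms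
    by (intro card_Un_disjoint) (auto intro: finite_subset)
  have "card A1 \<le> card X" "card A2 \<le> card Y" using assms by (auto intro: card_mono)
  then have "card X + card Y - (card A1 + card A2) = (card X - card A1) + (card Y - card A2)" by simp
  then show ?thesis unfolding subset_prob_def c1 c2 by (simp add: power_add)
qed

lemma sum_subset_prob:
  assumes "finite M"
  shows "(\<Sum>A\<in>Pow M. subset_prob p M A) = 1"
  using assms
proof (induct M rule: finite_induct)
  case empty
  then show ?case by (simp add: subset_prob_def)
next
  case (insert a M)
  have "(\<Sum>A\<in>Pow (M \<union> {a}). subset_prob p (M \<union> {a}) A) = (\<Sum>A1\<in>Pow M. \<Sum>A2\<in>Pow {a}. subset_prob p (M \<union> {a}) (A1 \<union> A2))"
    by (rule sum_Pow_Un) (use insert in auto)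
  also have "\<dots> = (\<Sum>A1\<in>Pow M. \<Sum>A2\<in>Pow {a}. subset_prob p M A1 * subset_prob p {a} A2)"
    by (intro sum.cong refl subset_prob_Un) (use insert in auto)
  also have "\<dots> = (\<Sum>A1\<in>Pow M. subset_prob p M A1 * (\<Sum>A2\<in>Pow {a}. subset_prob p {a} A2))"
    by (simp add: sum_distrib_left)
  also have "(\<Sum>A2\<in>Pow {a}. subset_prob p {a} A2) = 1"
  proof -
    have "Pow {a} = {{},{a}}" by blast
    then show ?thesis by (simp add: subset_prob_def)
  qed
  finally show ?case using insert by simp
qed

lemma subset_prob_nonneg: "0 \<le> p \<Longrightarrow> p \<le> 1 \<Longrightarrow> 0 \<le> subset_prob p M A"
  unfolding subset_prob_def by simp



lemma weighted_sum_minus_atom_bounds: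
  fixes w F :: "'a \<Rightarrow> real"
  assumes fin: "finite I" and i0: "i0 \<in> I" and wn: "\<And>i. i \<in> I \<Longrightarrow> 0 \<le> w i"
    and ws: "(\<Sum>i\<in>I. w i) = 1" and we: "e \<le> w i0" and e0: "0 \<le> e"
    and Fb: "\<And>i. i \<in> I \<Longrightarrow> lo \<le> F i \<and> F i \<le> lo + l"
  shows "(1 - e) * lo \<le> (\<Sum>i\<in>I. w i * F i) - e * F i0 \<and> (\<Sum>i\<in>I. w i * F i) - e * F i0 \<le> (1 - e) * (lo + l)"
proof -
  define w' where "w' i = w i - (if i = i0 then e else 0)" for i
  have w'n: "0 \<le> w' i" if "i \<in> I" for i using wn[OF that] we unfolding w'_def by auto
  have "(\<Sum>i\<in>I. w' i) = (\<Sum>i\<in>I. w i) - (\<Sum>i\<in>I. (if i = i0 then e else 0))"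
    unfolding w'_def by (simp add: sum_subtractf)
  then have w's: "(\<Sum>i\<in>I. w' i) = 1 - e" using ws fin i0 by simp
  have "(\<Sum>i\<in>I. w' i * F i) = (\<Sum>i\<in>I. w i * F i - (if i = i0 then e * F i else 0))"
    by (intro sum.cong refl) (simp add: w'_def algebra_simps)
  also have "\<dots> = (\<Sum>i\<in>I. w i * F i) - (\<Sum>i\<in>I. (if i = i0 then e * F i else 0))"
    by (rule sum_subtractf)
  finally have "(\<Sum>i\<in>I. w' i * F i) = (\<Sum>i\<in>I. w i * F i) - (\<Sum>i\<in>I. (if i = i0 then e * F i else 0))" .
  then have eq: "(\<Sum>i\<in>I. w' i * F i) = (\<Sum>i\<in>I. w i * F i) - e * F i0" using fin i0 by simp
  have "(\<Sum>i\<in>I. w' i * lo) \<le> (\<Sum>i\<in>I. w' i * F i)"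
    by (intro sum_mono mult_left_mono) (use Fb w'n in auto)
  moreover have "(\<Sum>i\<in>I. w' i * F i) \<le> (\<Sum>i\<in>I. w' i * (lo + l))"
    by (intro sum_mono mult_left_mono) (use Fb w'n in auto)
  moreover have "(\<Sum>i\<in>I. w' i * lo) = (1 - e) * lo" using w's by (simp add: sum_distrib_right[symmetric])
  moreover have "(\<Sum>i\<in>I. w' i * (lo + l)) = (1 - e) * (lo + l)" using w's by (simp add: sum_distrib_right[symmetric])
  ultimately show ?thesis using eq by simp
qed

section \<open>The block dynamics\<close>

lemma adj_coord_le: "adj d u w \<Longrightarrow> i < d \<Longrightarrow> \<bar>u i - w i\<bar> \<le> 1"
proof -
  assume a: "adj d u w" and i: "i < d"
  have "\<bar>u i - w i\<bar> \<le> (\<Sum>j<d. \<bar>u j - w j\<bar>)" by (rule member_le_sum) (use i in auto)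
  then show ?thesis using a unfolding adj_def by simp
qed

lemma adj_sym: "adj d u w \<Longrightarrow> adj d w u"
  unfolding adj_def by (simp add: abs_minus_commute)

locale block_dynamics =
  fixes d :: nat and V :: "vtx set" and q :: nat and \<beta> :: real and L :: nat and x :: vtx and \<tau> :: config
  assumes finite_V: "finite V" and V_coords: "\<And>y i. y \<in> V \<Longrightarrow> d \<le> i \<Longrightarrow> y i = 0"
    and q_ge_2: "q \<ge> 2" and beta_pos: "\<beta> > 0" and odd_L: "odd L"
begin

abbreviation "B \<equiv> block d V L x"
abbreviation "S \<equiv> configs B q"
abbreviation "E \<equiv> edges d V"
abbreviation "Ik \<equiv> I_kernel d V q \<beta> B \<tau>"

definition "p = 1 - exp (- \<beta>)"

definition "monoch \<sigma> = mono_edges E (glue B \<sigma> \<tau>)"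

definition "agrees \<sigma> A \<sigma>' \<longleftrightarrow> (\<forall>v\<in>B. v \<in> \<Union>A \<longrightarrow> \<sigma>' v = \<sigma> v)"

definition "resample \<sigma> A \<sigma>' =
  (if agrees \<sigma> A \<sigma>' then (1 / real q) ^ card {v\<in>B. v \<notin> \<Union>A} else 0)"

lemma Ik_eq: "Ik \<sigma> \<sigma>' = (\<Sum>A\<in>Pow (monoch \<sigma>). subset_prob p (monoch \<sigma>) A * resample \<sigma> A \<sigma>')"
  unfolding I_kernel_def Let_def subset_prob_def resample_def agrees_def monoch_def p_def
  by (simp add: mult.assoc)

lemma p_bounds: "0 < p" "p < 1" "1 - p = exp (- \<beta>)"
  using beta_pos unfolding p_def by auto

lemma finite_block: "finite B" using finite_V unfolding block_def by auto
lemma block_subset: "B \<subseteq> V" unfolding block_def by auto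
lemma finite_S: "finite S" using finite_block by (rule finite_configs)

lemma finite_E: "finite E"
proof -
  have "E \<subseteq> (\<lambda>(u,v). {u,v}) ` (V \<times> V)" unfolding edges_def by auto
  then show ?thesis using finite_V by (auto intro: finite_subset)
qed

lemma monoch_subset: "monoch \<sigma> \<subseteq> E" unfolding monoch_def mono_edges_def by auto
lemma finite_monoch: "finite (monoch \<sigma>)" using monoch_subset finite_E by (rule finite_subset)

lemma resample_nonneg: "0 \<le> resample \<sigma> A \<sigma>'" unfolding resample_def by simp

lemma sum_resample:
  assumes s: "\<sigma> \<in> S"
  shows "(\<Sum>\<sigma>'\<in>S. resample \<sigma> A \<sigma>') = 1"
proof -
  have "(\<Sum>\<sigma>'\<in>S. resample \<sigma> A \<sigma>') =
      (\<Sum>\<sigma>'\<in>S. if \<forall>v\<in>B \<inter> \<Union>A. \<sigma>' v = \<sigma> v then (1 / real q) ^ card (B - \<Union>A) else 0)"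
    unfolding resample_def agrees_def set_diff_eq by (intro sum.cong refl) auto
  also have "\<dots> = 1"
    by (rule sum_uniform_resample) (use finite_block s q_ge_2 in \<open>auto simp: configs_def\<close>)
  finally show ?thesis .
qed

lemma Ik_nonneg: "0 \<le> Ik \<sigma> \<sigma>'"
  unfolding Ik_eq using p_bounds by (intro sum_nonneg mult_nonneg_nonneg subset_prob_nonneg resample_nonneg) auto

lemma sum_Ik:
  assumes s: "\<sigma> \<in> S"
  shows "(\<Sum>\<sigma>'\<in>S. Ik \<sigma> \<sigma>') = 1"
proof -
  have "(\<Sum>\<sigma>'\<in>S. Ik \<sigma> \<sigma>') = (\<Sum>A\<in>Pow (monoch \<sigma>). subset_prob p (monoch \<sigma>) A * (\<Sum>\<sigma>'\<in>S. resample \<sigma> A \<sigma>'))"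
    unfolding Ik_eq by (simp add: sum.swap[of _ S] sum_distrib_left)
  also have "\<dots> = (\<Sum>A\<in>Pow (monoch \<sigma>). subset_prob p (monoch \<sigma>) A)" using sum_resample[OF s] by simp
  also have "\<dots> = 1" by (rule sum_subset_prob[OF finite_monoch])
  finally show ?thesis .
qed

lemma agrees_monoch_subset:
  assumes "A \<subseteq> monoch \<sigma>" "agrees \<sigma> A \<sigma>'"
  shows "A \<subseteq> monoch \<sigma>'"
proof
  fix e assume e: "e \<in> A"
  then obtain u v where ev: "e \<in> E" "e = {u,v}" "glue B \<sigma> \<tau> u = glue B \<sigma> \<tau> v"
    using assms(1) unfolding monoch_def mono_edges_def by auto
  have "glue B \<sigma>' \<tau> w = glue B \<sigma> \<tau> w" if "w \<in> e" for w
    using assms(2) e that unfolding agrees_def glue_def by auto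
  then have "glue B \<sigma>' \<tau> u = glue B \<sigma>' \<tau> v" using ev by auto
  then show "e \<in> monoch \<sigma>'" using ev unfolding monoch_def mono_edges_def by auto
qed

definition "gibbs_weight \<sigma> = exp (\<beta> * real (card (monoch \<sigma>)))"

lemma gibbs_weight_pos: "gibbs_weight \<sigma> > 0" unfolding gibbs_weight_def by simp

lemma gibbs_weight_subset_prob:
  assumes "A \<subseteq> monoch \<sigma>"
  shows "gibbs_weight \<sigma> * subset_prob p (monoch \<sigma>) A = (p * exp \<beta>) ^ card A"
proof -
  have le: "card A \<le> card (monoch \<sigma>)" using assms finite_monoch by (rule card_mono[rotated])
  have "gibbs_weight \<sigma> * subset_prob p (monoch \<sigma>) A = p ^ card A * (exp (\<beta> * card (monoch \<sigma>)) * exp (- \<beta>) ^ (card (monoch \<sigma>) - card A))"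
    unfolding gibbs_weight_def subset_prob_def p_bounds(3) by simp
  also have "exp (- \<beta>) ^ (card (monoch \<sigma>) - card A) = exp (- \<beta> * real (card (monoch \<sigma>) - card A))"
    by (simp add: exp_of_nat_mult[symmetric] mult.commute)
  also have "exp (\<beta> * card (monoch \<sigma>)) * \<dots> = exp (\<beta> * card A)"
    using le by (simp add: exp_add[symmetric] of_nat_diff algebra_simps)
  also have "p ^ card A * exp (\<beta> * card A) = (p * exp \<beta>) ^ card A"
    by (simp add: power_mult_distrib exp_of_nat_mult[symmetric] mult.commute)
  finally show ?thesis .
qed

lemma Ik_reversible:
  shows "gibbs_weight \<sigma> * Ik \<sigma> \<sigma>' = gibbs_weight \<sigma>' * Ik \<sigma>' \<sigma>"
proof -
  define g where "g A = (p * exp \<beta>) ^ card A * (1 / real q) ^ card {v\<in>B. v \<notin> \<Union>A}" for A :: "vtx set set"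
  define T where "T = {A \<in> Pow E. A \<subseteq> monoch \<sigma> \<and> A \<subseteq> monoch \<sigma>' \<and> agrees \<sigma> A \<sigma>'}"
  have agr_sym: "agrees \<sigma> A \<sigma>' = agrees \<sigma>' A \<sigma>" for A unfolding agrees_def by auto
  have key: "gibbs_weight s * Ik s s' = (\<Sum>A\<in>T. g A)" if ss: "(s = \<sigma> \<and> s' = \<sigma>') \<or> (s = \<sigma>' \<and> s' = \<sigma>)" for s s'
  proof -
    have mt: "A \<in> Pow E \<and> A \<subseteq> monoch t'" if "A \<subseteq> monoch t" "agrees t A t'" for A t t'
      using agrees_monoch_subset[OF that] monoch_subset by auto
    have T': "T = {A \<in> Pow (monoch s). agrees s A s'}" unfolding T_def using ss agr_sym mt by blast
    have "gibbs_weight s * Ik s s' = (\<Sum>A\<in>Pow (monoch s). gibbs_weight s * subset_prob p (monoch s) A * resample s A s')"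
      unfolding Ik_eq by (simp add: sum_distrib_left mult.assoc)
    also have "\<dots> = (\<Sum>A\<in>Pow (monoch s). (if agrees s A s' then g A else 0))"
      by (intro sum.cong refl) (auto simp: gibbs_weight_subset_prob resample_def g_def)
    also have "\<dots> = (\<Sum>A\<in>T. g A)" unfolding T' using finite_monoch
      by (simp add: sum.If_cases Int_def)
    finally show ?thesis .
  qed
  show ?thesis using key[of \<sigma> \<sigma>'] key[of \<sigma>' \<sigma>] by simp
qed

text \<open>\<open>B\<close> is the union of the cubes \<open>tile h\<close> of side \<open>L\<close> centred at \<open>x + (L + 3) h\<close>; distinct
  tiles are at distance at least 4.\<close>
definition "radius = (L - 1) div 2"
definition "centre h i = x i + int (L+3) * h i"
definition "tile h = {y \<in> B. \<forall>i<d. \<bar>y i - centre h i\<bar> \<le> int radius}"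

lemma tile_subset: "tile h \<subseteq> B" unfolding tile_def by auto

lemma block_covered: "v \<in> B \<Longrightarrow> \<exists>h. v \<in> tile h"
  unfolding tile_def block_def centre_def radius_def by auto

lemma two_radius: "2 * int radius + 1 = int L"
  using odd_L unfolding radius_def by (auto elim!: oddE)

lemma adj_tile_closed:
  assumes u: "u \<in> tile h" and w: "w \<in> B" and a: "adj d u w"
  shows "w \<in> tile h"
proof -
  obtain h' where w': "w \<in> tile h'" using block_covered[OF w] by auto
  have "\<bar>w i - centre h i\<bar> \<le> int radius" if i: "i < d" for i
  proof -
    have k1: "\<bar>u i - centre h i\<bar> \<le> int radius" using u i unfolding tile_def by auto
    have k2: "\<bar>w i - centre h' i\<bar> \<le> int radius" using w' i unfolding tile_def by auto
    have k3: "\<bar>u i - w i\<bar> \<le> 1" using adj_coord_le[OF a i] .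
    have "centre h i - centre h' i = int (L+3) * (h i - h' i)" unfolding centre_def by (simp add: algebra_simps)
    moreover have "\<bar>centre h i - centre h' i\<bar> \<le> int L"
    proof -
      have "centre h i - centre h' i = (w i - centre h' i) - (u i - centre h i) - (w i - u i)" by simp
      then have "\<bar>centre h i - centre h' i\<bar> \<le> \<bar>w i - centre h' i\<bar> + \<bar>u i - centre h i\<bar> + \<bar>u i - w i\<bar>" by linarith
      then show ?thesis using k1 k2 k3 two_radius by linarith
    qed
    ultimately have le: "\<bar>int (L+3) * (h i - h' i)\<bar> \<le> int L" by simp
    have "h i = h' i"
    proof (rule ccontr)
      assume "h i \<noteq> h' i"
      then have "\<bar>h i - h' i\<bar> \<ge> 1" by linarith
      then have "int (L+3) * 1 \<le> int (L+3) * \<bar>h i - h' i\<bar>" by (intro mult_left_mono) auto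
      then have "\<bar>int (L+3) * (h i - h' i)\<bar> \<ge> int (L+3) * 1" by (simp add: abs_mult)
      then show False using le by simp
    qed
    then have "centre h i = centre h' i" unfolding centre_def by simp
    then show ?thesis using k2 by simp
  qed
  then show ?thesis using w unfolding tile_def by auto
qed

lemma card_tile: "card (tile h) \<le> L ^ d"
proof -
  define lo where "lo i = centre h i - int radius" for i
  define \<phi> where "\<phi> y = restrict (\<lambda>i. nat (y i - lo i)) {..<d}" for y :: vtx
  have maps: "\<phi> ` tile h \<subseteq> PiE {..<d} (\<lambda>_. {0..<L})"
  proof
    fix z assume "z \<in> \<phi> ` tile h"
    then obtain y where y: "y \<in> tile h" "z = \<phi> y" by auto
    have "nat (y i - lo i) < L" if i: "i < d" for i
    proof -
      have "\<bar>y i - centre h i\<bar> \<le> int radius" using y(1) i unfolding tile_def by blast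
      then have "0 \<le> y i - lo i" "y i - lo i < int L" unfolding lo_def using two_radius by linarith+
      then show ?thesis by (simp add: nat_less_iff)
    qed
    then show "z \<in> PiE {..<d} (\<lambda>_. {0..<L})" unfolding y(2) \<phi>_def by auto
  qed
  have inj: "inj_on \<phi> (tile h)"
  proof (rule inj_onI)
    fix y y' assume y: "y \<in> tile h" and y': "y' \<in> tile h" and e: "\<phi> y = \<phi> y'"
    show "y = y'"
    proof
      fix i
      show "y i = y' i"
      proof (cases "i < d")
        case True
        have "\<phi> y i = \<phi> y' i" using e by simp
        then have "nat (y i - lo i) = nat (y' i - lo i)" using True unfolding \<phi>_def by simp
        moreover have "\<bar>y i - centre h i\<bar> \<le> int radius" "\<bar>y' i - centre h i\<bar> \<le> int radius"
          using y y' True unfolding tile_def by blast+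
        then have "y i - lo i \<ge> 0" "y' i - lo i \<ge> 0" unfolding lo_def by linarith+
        ultimately show ?thesis by simp
      next
        case False
        have "y \<in> V" "y' \<in> V" using y y' tile_subset block_subset by auto
        moreover have "d \<le> i" using False by simp
        ultimately show ?thesis using V_coords by metis
      qed
    qed
  qed
  have "card (tile h) = card (\<phi> ` tile h)" using inj by (simp add: card_image)
  also have "\<dots> \<le> card (PiE {..<d} (\<lambda>_. {0..<L}))" by (rule card_mono[OF _ maps]) (simp add: finite_PiE)
  also have "\<dots> = L ^ d" by (simp add: card_PiE)
  finally show ?thesis .
qed

lemma adj_unit_step:
  assumes u: "u \<in> V" and w: "w \<in> V" and a: "adj d u w"
  shows "\<exists>i<d. \<exists>s\<in>{-1,1}. w = u(i := u i + s)"
proof -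
  let ?t = "\<lambda>j. \<bar>u j - w j\<bar>"
  have sum1: "(\<Sum>j<d. ?t j) = 1" using a unfolding adj_def .
  obtain i where i: "i < d" "?t i \<noteq> 0"
  proof (rule ccontr)
    assume "\<not> thesis"
    then have "\<forall>j<d. ?t j = 0" using that by blast
    then have "(\<Sum>j<d. ?t j) = 0" by simp
    then show False using sum1 by simp
  qed
  have ti: "?t i = 1" using adj_coord_le[OF a i(1)] i(2) by linarith
  have rest: "(\<Sum>j\<in>{..<d} - {i}. ?t j) = 0"
    using sum1 ti i(1) by (simp add: sum_diff1)
  have z: "?t j = 0" if "j < d" "j \<noteq> i" for j
    using rest that by (subst (asm) sum_nonneg_eq_0_iff) auto
  define s where "s = w i - u i"
  have s: "s \<in> {-1,1}" using ti unfolding s_def by (auto simp: abs_if split: if_splits)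
  have "w = u(i := u i + s)"
  proof
    fix j show "w j = (u(i := u i + s)) j"
    proof (cases "j = i")
      case False
      show ?thesis
      proof (cases "j < d")
        case True then show ?thesis using z[OF True False] False by simp
      next
        case False2: False
        then have "d \<le> j" by simp
        then have "w j = 0" "u j = 0" using V_coords u w by metis+
        then show ?thesis using False by simp
      qed
    qed (simp add: s_def)
  qed
  then show ?thesis using i(1) s by blast
qed

lemma card_edges_at:
  assumes u: "u \<in> V"
  shows "card {e \<in> E. u \<in> e} \<le> 2 * d"
proof -
  have "{e \<in> E. u \<in> e} \<subseteq> (\<lambda>(i,s). {u, u(i := u i + s)}) ` ({..<d} \<times> {-1,1})"
  proof
    fix e assume "e \<in> {e \<in> E. u \<in> e}"
    then obtain a b where e: "e = {a,b}" "a \<in> V" "b \<in> V" "adj d a b" "u \<in> e" unfolding edges_def by auto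
    obtain w where w: "w \<in> V" "adj d u w" "e = {u,w}"
      using e adj_sym by (cases "u = a") auto
    from adj_unit_step[OF u w(1,2)] obtain i s where "i < d" "s \<in> {-1,1}" "w = u(i := u i + s)" by blast
    then show "e \<in> (\<lambda>(i,s). {u, u(i := u i + s)}) ` ({..<d} \<times> {-1,1})" using w(3) by auto
  qed
  then have "card {e \<in> E. u \<in> e} \<le> card ((\<lambda>(i,s). {u, u(i := u i + s)}) ` ({..<d} \<times> {-1::int,1}))"
    by (rule card_mono[rotated]) auto
  also have "\<dots> \<le> card ({..<d} \<times> {-1::int,1})" by (rule card_image_le) auto
  also have "\<dots> = 2 * d" by (simp add: card_cartesian_product)
  finally show ?thesis .
qed

definition "tile_edges h = {e \<in> E. \<exists>u\<in>e. u \<in> tile h}"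

lemma card_tile_edges: "card (tile_edges h) \<le> 2 * d * L ^ d"
proof -
  have "tile_edges h \<subseteq> (\<Union>u\<in>tile h. {e \<in> E. u \<in> e})" unfolding tile_edges_def by auto
  then have "card (tile_edges h) \<le> card (\<Union>u\<in>tile h. {e \<in> E. u \<in> e})"
    by (rule card_mono[rotated]) (rule finite_subset[OF _ finite_E], auto)
  also have "\<dots> \<le> (\<Sum>u\<in>tile h. card {e \<in> E. u \<in> e})" by (rule card_UN_le) (use finite_block tile_subset finite_subset in blast)
  also have "\<dots> \<le> (\<Sum>u\<in>tile h. 2 * d)" by (intro sum_mono card_edges_at) (use tile_subset block_subset in auto)
  also have "\<dots> = card (tile h) * (2 * d)" by simp
  also have "\<dots> \<le> L ^ d * (2 * d)" using card_tile by (intro mult_right_mono) auto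
  finally show ?thesis by (simp add: mult.commute)
qed



section \<open>Contraction of the oscillation\<close>

definition "tile_pairs =
  {(\<sigma>1,\<sigma>2). \<sigma>1 \<in> S \<and> \<sigma>2 \<in> S \<and> (\<exists>h. \<forall>v\<in>B. v \<notin> tile h \<longrightarrow> \<sigma>1 v = \<sigma>2 v)}"

definition osc :: "(config \<Rightarrow> real) \<Rightarrow> real" where
  "osc f = Max ((\<lambda>(a,b). \<bar>f a - f b\<bar>) ` tile_pairs)"

definition Ikf :: "(config \<Rightarrow> real) \<Rightarrow> config \<Rightarrow> real" where
  "Ikf f \<sigma> = (\<Sum>\<sigma>'\<in>S. Ik \<sigma> \<sigma>' * f \<sigma>')"

lemma S_nonempty: "S \<noteq> {}"
proof -
  have "(\<lambda>v. if v \<in> B then 1 else 0) \<in> S" using q_ge_2 by (auto simp: configs_def)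
  then show ?thesis by auto
qed

lemma finite_tile_pairs: "finite tile_pairs"
  by (rule finite_subset[of _ "S \<times> S"]) (auto simp: tile_pairs_def finite_S)

lemma tile_pairs_nonempty: "tile_pairs \<noteq> {}"
proof -
  obtain s where "s \<in> S" using S_nonempty by auto
  then have "(s,s) \<in> tile_pairs" unfolding tile_pairs_def by auto
  then show ?thesis by auto
qed

lemma osc_ge: "(a,b) \<in> tile_pairs \<Longrightarrow> \<bar>f a - f b\<bar> \<le> osc f"
  unfolding osc_def by (rule Max_ge) (use finite_tile_pairs in auto)

lemma osc_attained: "\<exists>(a,b)\<in>tile_pairs. osc f = \<bar>f a - f b\<bar>"
proof -
  have "osc f \<in> (\<lambda>(a,b). \<bar>f a - f b\<bar>) ` tile_pairs" unfolding osc_def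
    by (rule Max_in) (use finite_tile_pairs tile_pairs_nonempty in auto)
  then show ?thesis by auto
qed

lemma osc_zero_imp_constant:
  assumes "osc f = 0"
  shows "a \<in> S \<Longrightarrow> b \<in> S \<Longrightarrow> f a = f b"
proof (induct "card {v\<in>B. a v \<noteq> b v}" arbitrary: a rule: less_induct)
  case less
  show ?case
  proof (cases "{v\<in>B. a v \<noteq> b v} = {}")
    case True
    have "a = b"
    proof
      fix u show "a u = b u" by (cases "u \<in> B") (use True less(2,3) in \<open>auto simp: configs_def\<close>)
    qed
    then show ?thesis by simp
  next
    case False
    then obtain v where v: "v \<in> B" "a v \<noteq> b v" by auto
    obtain h where h: "v \<in> tile h" using block_covered[OF v(1)] by auto
    define a' where "a' u = (if u \<in> tile h then b u else a u)" for u
    have a'S: "a' \<in> S" using less(2,3) tile_subset unfolding a'_def configs_def by auto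
    have "(a,a') \<in> tile_pairs" unfolding tile_pairs_def using less(2) a'S by (auto simp: a'_def)
    then have e1: "f a = f a'" using osc_ge[of a a' f] assms by simp
    have sub: "{u\<in>B. a' u \<noteq> b u} \<subset> {u\<in>B. a u \<noteq> b u}"
    proof
      show "{u\<in>B. a' u \<noteq> b u} \<subseteq> {u\<in>B. a u \<noteq> b u}" unfolding a'_def by auto
      show "{u\<in>B. a' u \<noteq> b u} \<noteq> {u\<in>B. a u \<noteq> b u}" using v h unfolding a'_def by auto
    qed
    have "card {u\<in>B. a' u \<noteq> b u} < card {u\<in>B. a u \<noteq> b u}"
      by (rule psubset_card_mono) (use finite_block sub in auto)
    then have "f a' = f b" using less(1) a'S less(3) by blast
    then show ?thesis using e1 by simp
  qed
qed

definition "off_tile h = B - tile h"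

definition resample_mean :: "(config \<Rightarrow> real) \<Rightarrow> config \<Rightarrow> vtx set set \<Rightarrow> real" where
  "resample_mean f \<sigma> A = (\<Sum>\<sigma>'\<in>S. resample \<sigma> A \<sigma>' * f \<sigma>')"

definition tile_min :: "(config \<Rightarrow> real) \<Rightarrow> vtx \<Rightarrow> config \<Rightarrow> real" where
  "tile_min f h \<sigma>' = Min (f ` {\<rho>\<in>S. \<forall>v\<in>off_tile h. \<rho> v = \<sigma>' v})"

definition "tile_resample h \<sigma> A \<kappa> =
  (if \<forall>v\<in>tile h \<inter> \<Union>A. \<kappa> v = \<sigma> v then (1/real q) ^ card (tile h - \<Union>A) else 0)"

definition "off_tile_resample h \<sigma> A \<rho> =
  (if \<forall>v\<in>off_tile h \<inter> \<Union>A. \<rho> v = \<sigma> v then (1/real q) ^ card (off_tile h - \<Union>A) else 0)"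

lemma resample_config_union:
  assumes k: "\<kappa> \<in> configs (tile h) q" and r: "\<rho> \<in> configs (off_tile h) q"
  shows "resample \<sigma> A (config_union \<kappa> \<rho>) = tile_resample h \<sigma> A \<kappa> * off_tile_resample h \<sigma> A \<rho>"
    and "config_restrict (config_union \<kappa> \<rho>) (off_tile h) = \<rho>"
proof -
  let ?C = "tile h" and ?R = "off_tile h"
  have BU: "B = ?C \<union> ?R" unfolding off_tile_def using tile_subset by auto
  have dj: "?C \<inter> ?R = {}" unfolding off_tile_def by auto
  have kz: "\<kappa> v = 0" if "v \<notin> ?C" for v using k that unfolding configs_def by auto
  have rz: "\<rho> v = 0" if "v \<notin> ?R" for v using r that unfolding configs_def by auto
  show "config_restrict (config_union \<kappa> \<rho>) ?R = \<rho>"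
    using kz rz dj unfolding config_restrict_def config_union_def by fastforce
  have c1: "config_union \<kappa> \<rho> v = \<kappa> v" if "v \<in> ?C" for v
    using that dj rz[of v] unfolding config_union_def by auto
  have c2: "config_union \<kappa> \<rho> v = \<rho> v" if "v \<in> ?R" for v
    using that dj kz[of v] unfolding config_union_def by auto
  have ag: "agrees \<sigma> A (config_union \<kappa> \<rho>) \<longleftrightarrow> (\<forall>v\<in>?C \<inter> \<Union>A. \<kappa> v = \<sigma> v) \<and> (\<forall>v\<in>?R \<inter> \<Union>A. \<rho> v = \<sigma> v)"
    unfolding agrees_def using BU c1 c2 by auto
  have "{v\<in>B. v \<notin> \<Union>A} = (?C - \<Union>A) \<union> (?R - \<Union>A)" using BU by auto
  then have cd: "card {v\<in>B. v \<notin> \<Union>A} = card (?C - \<Union>A) + card (?R - \<Union>A)"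
    using finite_block dj BU by (simp add: card_Un_disjoint disjoint_iff)
  show "resample \<sigma> A (config_union \<kappa> \<rho>) = tile_resample h \<sigma> A \<kappa> * off_tile_resample h \<sigma> A \<rho>"
    unfolding resample_def tile_resample_def off_tile_resample_def ag cd by (simp add: power_add)
qed

lemma resample_mean_off_tile:
  assumes s: "\<sigma> \<in> S" and g: "\<And>\<sigma>'. g \<sigma>' = g (config_restrict \<sigma>' (off_tile h))"
  shows "(\<Sum>\<sigma>'\<in>S. resample \<sigma> A \<sigma>' * g \<sigma>') = (\<Sum>\<rho>\<in>configs (off_tile h) q. off_tile_resample h \<sigma> A \<rho> * g \<rho>)"
proof -
  let ?C = "tile h" and ?R = "off_tile h"
  have BU: "B = ?C \<union> ?R" unfolding off_tile_def using tile_subset by auto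
  have dj: "?C \<inter> ?R = {}" unfolding off_tile_def by auto
  have "(\<Sum>\<sigma>'\<in>S. resample \<sigma> A \<sigma>' * g \<sigma>') =
      (\<Sum>\<kappa>\<in>configs ?C q. \<Sum>\<rho>\<in>configs ?R q. resample \<sigma> A (config_union \<kappa> \<rho>) * g (config_union \<kappa> \<rho>))"
    unfolding BU by (rule sum_configs_Un[OF dj])
  also have "\<dots> = (\<Sum>\<kappa>\<in>configs ?C q. \<Sum>\<rho>\<in>configs ?R q. tile_resample h \<sigma> A \<kappa> * (off_tile_resample h \<sigma> A \<rho> * g \<rho>))"
  proof (intro sum.cong refl)
    fix \<kappa> \<rho> assume "\<kappa> \<in> configs ?C q" "\<rho> \<in> configs ?R q"
    then show "resample \<sigma> A (config_union \<kappa> \<rho>) * g (config_union \<kappa> \<rho>) =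
        tile_resample h \<sigma> A \<kappa> * (off_tile_resample h \<sigma> A \<rho> * g \<rho>)"
      using g[of "config_union \<kappa> \<rho>"] by (simp add: resample_config_union)
  qed
  also have "\<dots> = (\<Sum>\<kappa>\<in>configs ?C q. tile_resample h \<sigma> A \<kappa>) * (\<Sum>\<rho>\<in>configs ?R q. off_tile_resample h \<sigma> A \<rho> * g \<rho>)"
    by (rule sum_product[symmetric])
  also have "(\<Sum>\<kappa>\<in>configs ?C q. tile_resample h \<sigma> A \<kappa>) = 1"
    unfolding tile_resample_def
    by (rule sum_uniform_resample) (use finite_block tile_subset s q_ge_2 in \<open>auto intro: finite_subset simp: configs_def\<close>)
  finally show ?thesis by simp
qed

lemma tile_min_restrict: "tile_min f h \<sigma>' = tile_min f h (config_restrict \<sigma>' (off_tile h))"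
  unfolding tile_min_def config_restrict_def by simp

lemma tile_min_bounds:
  assumes s: "\<sigma>' \<in> S"
  shows "tile_min f h \<sigma>' \<le> f \<sigma>' \<and> f \<sigma>' \<le> tile_min f h \<sigma>' + osc f"
proof -
  define T where "T = {\<rho>\<in>S. \<forall>v\<in>off_tile h. \<rho> v = \<sigma>' v}"
  have fT: "finite T" unfolding T_def using finite_S by auto
  have sT: "\<sigma>' \<in> T" unfolding T_def using s by auto
  have "tile_min f h \<sigma>' \<le> f \<sigma>'" unfolding tile_min_def T_def[symmetric] by (rule Min_le) (use fT sT in auto)
  moreover have "tile_min f h \<sigma>' \<in> f ` T" unfolding tile_min_def T_def[symmetric] by (rule Min_in) (use fT sT in auto)
  then obtain \<rho> where r: "\<rho> \<in> T" "tile_min f h \<sigma>' = f \<rho>" by auto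
  have "(\<rho>, \<sigma>') \<in> tile_pairs" unfolding tile_pairs_def using r(1) s unfolding T_def off_tile_def by auto
  then have "\<bar>f \<rho> - f \<sigma>'\<bar> \<le> osc f" by (rule osc_ge)
  then have "f \<sigma>' \<le> f \<rho> + osc f" by linarith
  then have "f \<sigma>' \<le> tile_min f h \<sigma>' + osc f" using r(2) by simp
  ultimately show ?thesis by simp
qed

lemma resample_mean_bounds:
  assumes s: "\<sigma> \<in> S"
  shows "resample_mean (tile_min f h) \<sigma> A \<le> resample_mean f \<sigma> A \<and> resample_mean f \<sigma> A \<le> resample_mean (tile_min f h) \<sigma> A + osc f"
proof -
  have "resample_mean (tile_min f h) \<sigma> A \<le> resample_mean f \<sigma> A" unfolding resample_mean_def
    by (intro sum_mono mult_left_mono) (use tile_min_bounds resample_nonneg in auto)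
  moreover have "resample_mean f \<sigma> A \<le> (\<Sum>\<sigma>'\<in>S. resample \<sigma> A \<sigma>' * (tile_min f h \<sigma>' + osc f))" unfolding resample_mean_def
    by (intro sum_mono mult_left_mono) (use tile_min_bounds resample_nonneg in auto)
  moreover have "(\<Sum>\<sigma>'\<in>S. resample \<sigma> A \<sigma>' * (tile_min f h \<sigma>' + osc f)) = resample_mean (tile_min f h) \<sigma> A + osc f"
  proof -
    have "(\<Sum>\<sigma>'\<in>S. resample \<sigma> A \<sigma>' * (tile_min f h \<sigma>' + osc f)) = (\<Sum>\<sigma>'\<in>S. resample \<sigma> A \<sigma>' * tile_min f h \<sigma>') + (\<Sum>\<sigma>'\<in>S. resample \<sigma> A \<sigma>') * osc f"
      by (simp add: distrib_left sum.distrib sum_distrib_right)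
    then show ?thesis unfolding resample_mean_def using sum_resample[OF s] by simp
  qed
  ultimately show ?thesis by simp
qed

lemma resample_mean_tile_min_eq:
  assumes sa: "\<sigma>a \<in> S" and sb: "\<sigma>b \<in> S" and ag: "\<forall>v\<in>off_tile h. \<sigma>a v = \<sigma>b v"
    and AA: "off_tile h \<inter> \<Union>A = off_tile h \<inter> \<Union>A'"
  shows "resample_mean (tile_min f h) \<sigma>a A = resample_mean (tile_min f h) \<sigma>b A'"
proof -
  have "resample_mean (tile_min f h) \<sigma>a A = (\<Sum>\<rho>\<in>configs (off_tile h) q. off_tile_resample h \<sigma>a A \<rho> * tile_min f h \<rho>)"
    unfolding resample_mean_def by (rule resample_mean_off_tile[OF sa]) (rule tile_min_restrict)
  also have "\<dots> = (\<Sum>\<rho>\<in>configs (off_tile h) q. off_tile_resample h \<sigma>b A' \<rho> * tile_min f h \<rho>)"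
  proof (intro sum.cong refl)
    fix \<rho>
    have c: "off_tile h - \<Union>A = off_tile h - \<Union>A'" using AA by auto
    have "(\<forall>v\<in>off_tile h \<inter> \<Union>A. \<rho> v = \<sigma>a v) \<longleftrightarrow> (\<forall>v\<in>off_tile h \<inter> \<Union>A'. \<rho> v = \<sigma>b v)"
      using AA ag by auto
    then show "off_tile_resample h \<sigma>a A \<rho> * tile_min f h \<rho> = off_tile_resample h \<sigma>b A' \<rho> * tile_min f h \<rho>" unfolding off_tile_resample_def c by simp
  qed
  also have "\<dots> = resample_mean (tile_min f h) \<sigma>b A'"
    unfolding resample_mean_def by (rule resample_mean_off_tile[OF sb, symmetric]) (rule tile_min_restrict)
  finally show ?thesis .
qed

lemma tile_edges_off_tile: "e \<in> tile_edges h \<Longrightarrow> off_tile h \<inter> e = {}"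
proof -
  assume e: "e \<in> tile_edges h"
  then obtain u where u: "u \<in> e" "u \<in> tile h" unfolding tile_edges_def by auto
  obtain a b where ab: "e = {a,b}" "adj d a b" using e unfolding tile_edges_def edges_def by auto
  have "w \<notin> off_tile h" if w: "w \<in> e" for w
  proof (cases "w \<in> B")
    case True
    have "w = u \<or> adj d u w" using ab u(1) w adj_sym by auto
    then show ?thesis using adj_tile_closed[OF u(2) True] u(2) unfolding off_tile_def by auto
  qed (simp add: off_tile_def)
  then show ?thesis by auto
qed

lemma monoch_cong:
  assumes "e \<in> E" "\<forall>u\<in>e. glue B \<sigma>1 \<tau> u = glue B \<sigma>2 \<tau> u"
  shows "e \<in> monoch \<sigma>1 \<longleftrightarrow> e \<in> monoch \<sigma>2"
proof -
  have "\<forall>u v. e = {u,v} \<longrightarrow> (glue B \<sigma>1 \<tau> u = glue B \<sigma>1 \<tau> v \<longleftrightarrow> glue B \<sigma>2 \<tau> u = glue B \<sigma>2 \<tau> v)"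
    using assms(2) by auto
  then show ?thesis using assms(1) unfolding monoch_def mono_edges_def by blast
qed

lemma Ikf_eq:
  "Ikf f \<sigma> = (\<Sum>A\<in>Pow (monoch \<sigma>). subset_prob p (monoch \<sigma>) A * resample_mean f \<sigma> A)"
proof -
  have "Ikf f \<sigma> = (\<Sum>\<sigma>'\<in>S. \<Sum>A\<in>Pow (monoch \<sigma>). subset_prob p (monoch \<sigma>) A * (resample \<sigma> A \<sigma>' * f \<sigma>'))"
    unfolding Ikf_def Ik_eq by (simp add: sum_distrib_right mult.assoc)
  also have "\<dots> = (\<Sum>A\<in>Pow (monoch \<sigma>). \<Sum>\<sigma>'\<in>S. subset_prob p (monoch \<sigma>) A * (resample \<sigma> A \<sigma>' * f \<sigma>'))"
    by (rule sum.swap)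
  also have "\<dots> = (\<Sum>A\<in>Pow (monoch \<sigma>). subset_prob p (monoch \<sigma>) A * resample_mean f \<sigma> A)"
    unfolding resample_mean_def by (simp add: sum_distrib_left)
  finally show ?thesis .
qed

definition "eps = (1 - p) ^ (2 * d * L ^ d)"

lemma eps_bounds: "0 < eps" "eps \<le> 1"
proof -
  have "0 < 1 - p" "1 - p \<le> 1" using p_bounds(1,2) by auto
  then show "0 < eps" "eps \<le> 1" unfolding eps_def by (auto intro: power_le_one)
qed

definition tile_mean :: "(config \<Rightarrow> real) \<Rightarrow> vtx \<Rightarrow> config \<Rightarrow> vtx set set \<Rightarrow> real" where
  "tile_mean f h s A1 = (\<Sum>A2\<in>Pow (monoch s \<inter> tile_edges h).
     subset_prob p (monoch s \<inter> tile_edges h) A2 * resample_mean f s (A1 \<union> A2))"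

lemma Ikf_tile_split:
  "Ikf f s = (\<Sum>A1\<in>Pow (monoch s - tile_edges h). subset_prob p (monoch s - tile_edges h) A1 * tile_mean f h s A1)"
proof -
  let ?M0 = "monoch s - tile_edges h" and ?M1 = "monoch s \<inter> tile_edges h"
  have dj: "?M0 \<inter> ?M1 = {}" by auto
  have fin: "finite ?M0" "finite ?M1" using finite_monoch by auto
  have "Ikf f s = (\<Sum>A\<in>Pow (?M0 \<union> ?M1). subset_prob p (?M0 \<union> ?M1) A * resample_mean f s A)"
    using Ikf_eq[of f s] by (simp add: Un_Diff_Int)
  also have "\<dots> = (\<Sum>A1\<in>Pow ?M0. \<Sum>A2\<in>Pow ?M1. subset_prob p (?M0 \<union> ?M1) (A1 \<union> A2) * resample_mean f s (A1 \<union> A2))"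
    by (rule sum_Pow_Un[OF dj])
  also have "\<dots> = (\<Sum>A1\<in>Pow ?M0. \<Sum>A2\<in>Pow ?M1. subset_prob p ?M0 A1 * (subset_prob p ?M1 A2 * resample_mean f s (A1 \<union> A2)))"
    by (intro sum.cong refl) (subst subset_prob_Un[OF fin dj], auto)
  also have "\<dots> = (\<Sum>A1\<in>Pow ?M0. subset_prob p ?M0 A1 * tile_mean f h s A1)"
    unfolding tile_mean_def by (simp add: sum_distrib_left)
  finally show ?thesis .
qed

lemma monoch_off_tile_edges_eq:
  assumes ag: "\<forall>v\<in>B. v \<notin> tile h \<longrightarrow> \<sigma>1 v = \<sigma>2 v"
  shows "monoch \<sigma>1 - tile_edges h = monoch \<sigma>2 - tile_edges h"
proof -
  have "e \<in> monoch \<sigma>1 \<longleftrightarrow> e \<in> monoch \<sigma>2" if e: "e \<in> E - tile_edges h" for e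
  proof (rule monoch_cong)
    show "\<forall>u\<in>e. glue B \<sigma>1 \<tau> u = glue B \<sigma>2 \<tau> u"
      using e ag unfolding tile_edges_def glue_def by auto
  qed (use e in simp)
  then show ?thesis using monoch_subset by blast
qed

text \<open>With probability at least \<open>eps\<close> no edge touching the tile is kept, and then the
  resampled configuration does not depend on the spins in the tile; otherwise it is squeezed
  between \<open>tile_min\<close> and \<open>tile_min + osc f\<close>, which depend only on the spins off the tile.\<close>
lemma tile_mean_bounds:
  assumes s: "s \<in> S" and \<sigma>: "\<sigma> \<in> S" and ag: "\<forall>v\<in>off_tile h. s v = \<sigma> v"
    and A1: "A1 \<subseteq> E - tile_edges h" and same: "resample_mean f s A1 = resample_mean f \<sigma> A1"
  defines "H \<equiv> resample_mean (tile_min f h) \<sigma> A1"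
  shows "(1 - eps) * H \<le> tile_mean f h s A1 - eps * resample_mean f \<sigma> A1"
    and "tile_mean f h s A1 - eps * resample_mean f \<sigma> A1 \<le> (1 - eps) * (H + osc f)"
proof -
  let ?M1 = "monoch s \<inter> tile_edges h"
  have fin: "finite ?M1" using finite_monoch by auto
  have eps_le: "eps \<le> subset_prob p ?M1 {}"
  proof -
    have "card ?M1 \<le> card (tile_edges h)"
      by (rule card_mono) (use finite_E in \<open>auto simp: tile_edges_def\<close>)
    then have "card ?M1 \<le> 2 * d * L ^ d" using card_tile_edges[of h] by linarith
    then have "(1 - p) ^ (2 * d * L ^ d) \<le> (1 - p) ^ card ?M1"
      by (rule power_decreasing) (use p_bounds(1,2) in auto)
    then show ?thesis unfolding eps_def subset_prob_def by simp
  qed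
  have squeeze: "H \<le> resample_mean f s (A1 \<union> A2) \<and> resample_mean f s (A1 \<union> A2) \<le> H + osc f"
    if A2: "A2 \<in> Pow ?M1" for A2
  proof -
    have "off_tile h \<inter> \<Union>(A1 \<union> A2) = off_tile h \<inter> \<Union>A1"
      using A2 tile_edges_off_tile by blast
    then have "resample_mean (tile_min f h) s (A1 \<union> A2) = H"
      unfolding H_def by (intro resample_mean_tile_min_eq s \<sigma>) (use ag in auto)
    then show ?thesis using resample_mean_bounds[OF s, of f h "A1 \<union> A2"] by simp
  qed
  have "(1 - eps) * H \<le> tile_mean f h s A1 - eps * resample_mean f s (A1 \<union> {}) \<and>
      tile_mean f h s A1 - eps * resample_mean f s (A1 \<union> {}) \<le> (1 - eps) * (H + osc f)"
    unfolding tile_mean_def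
  proof (rule weighted_sum_minus_atom_bounds)
    show "finite (Pow ?M1)" using fin by (simp only: finite_Pow_iff)
    show "\<And>A2. A2 \<in> Pow ?M1 \<Longrightarrow> 0 \<le> subset_prob p ?M1 A2"
      using p_bounds by (intro subset_prob_nonneg) auto
    show "(\<Sum>A2\<in>Pow ?M1. subset_prob p ?M1 A2) = 1" by (rule sum_subset_prob[OF fin])
    show "0 \<le> eps" using eps_bounds by simp
  qed (use eps_le squeeze in auto)
  then show "(1 - eps) * H \<le> tile_mean f h s A1 - eps * resample_mean f \<sigma> A1"
    and "tile_mean f h s A1 - eps * resample_mean f \<sigma> A1 \<le> (1 - eps) * (H + osc f)"
    using same by auto
qed

lemma tile_mean_close:
  assumes s1: "\<sigma>1 \<in> S" and s2: "\<sigma>2 \<in> S" and ag: "\<forall>v\<in>B. v \<notin> tile h \<longrightarrow> \<sigma>1 v = \<sigma>2 v"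
    and A1: "A1 \<subseteq> E - tile_edges h"
  shows "\<bar>tile_mean f h \<sigma>1 A1 - tile_mean f h \<sigma>2 A1\<bar> \<le> (1 - eps) * osc f"
proof -
  have "\<sigma>1 v = \<sigma>2 v" if v: "v \<in> B" "v \<in> \<Union>A1" for v
  proof -
    obtain e where "e \<in> A1" "v \<in> e" using v(2) by blast
    then have "v \<notin> tile h" using A1 unfolding tile_edges_def by blast
    then show ?thesis using ag v(1) by blast
  qed
  then have "agrees \<sigma>1 A1 \<sigma>' \<longleftrightarrow> agrees \<sigma>2 A1 \<sigma>'" for \<sigma>'
    unfolding agrees_def by auto
  then have same: "resample_mean f \<sigma>2 A1 = resample_mean f \<sigma>1 A1"
    unfolding resample_mean_def resample_def by simp
  have ag': "\<forall>v\<in>off_tile h. \<sigma>2 v = \<sigma>1 v" using ag unfolding off_tile_def by auto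
  have ag1: "\<forall>v\<in>off_tile h. \<sigma>1 v = \<sigma>1 v" by simp
  note b1 = tile_mean_bounds[where f = f, OF s1 s1 ag1 A1 refl, unfolded distrib_left]
  note b2 = tile_mean_bounds[OF s2 s1 ag' A1 same, unfolded distrib_left]
  show ?thesis unfolding abs_le_iff by (intro conjI) (use b1 b2 in linarith)+
qed

lemma Ikf_contract:
  assumes s1: "\<sigma>1 \<in> S" and s2: "\<sigma>2 \<in> S" and ag: "\<forall>v\<in>B. v \<notin> tile h \<longrightarrow> \<sigma>1 v = \<sigma>2 v"
  shows "\<bar>Ikf f \<sigma>1 - Ikf f \<sigma>2\<bar> \<le> (1 - eps) * osc f"
proof -
  define M0 where "M0 = monoch \<sigma>1 - tile_edges h"
  have M0: "M0 = monoch \<sigma>2 - tile_edges h" "finite M0" "M0 \<subseteq> E - tile_edges h"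
    using monoch_off_tile_edges_eq[OF ag] finite_monoch monoch_subset unfolding M0_def by auto
  have "Ikf f \<sigma>1 - Ikf f \<sigma>2 = (\<Sum>A1\<in>Pow M0. subset_prob p M0 A1 * (tile_mean f h \<sigma>1 A1 - tile_mean f h \<sigma>2 A1))"
    using Ikf_tile_split[of f \<sigma>1 h] Ikf_tile_split[of f \<sigma>2 h] M0(1)
    unfolding M0_def by (simp add: sum_subtractf algebra_simps)
  then have "\<bar>Ikf f \<sigma>1 - Ikf f \<sigma>2\<bar> \<le> (\<Sum>A1\<in>Pow M0. \<bar>subset_prob p M0 A1 * (tile_mean f h \<sigma>1 A1 - tile_mean f h \<sigma>2 A1)\<bar>)"
    by (simp only: sum_abs)
  also have "\<dots> \<le> (\<Sum>A1\<in>Pow M0. subset_prob p M0 A1 * ((1 - eps) * osc f))"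
  proof (rule sum_mono)
    fix A1 assume "A1 \<in> Pow M0"
    then have "\<bar>tile_mean f h \<sigma>1 A1 - tile_mean f h \<sigma>2 A1\<bar> \<le> (1 - eps) * osc f"
      using M0(3) by (intro tile_mean_close[OF s1 s2 ag]) auto
    moreover have "0 \<le> subset_prob p M0 A1" using p_bounds by (intro subset_prob_nonneg) auto
    ultimately show "\<bar>subset_prob p M0 A1 * (tile_mean f h \<sigma>1 A1 - tile_mean f h \<sigma>2 A1)\<bar>
        \<le> subset_prob p M0 A1 * ((1 - eps) * osc f)"
      unfolding abs_mult by (simp add: mult_left_mono)
  qed
  also have "\<dots> = (1 - eps) * osc f"
    using sum_subset_prob[OF M0(2), of p] by (simp add: sum_distrib_right[symmetric])
  finally show ?thesis .
qed

lemma eigenfunction_osc_contract: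
  assumes ev: "\<And>\<sigma>. \<sigma> \<in> S \<Longrightarrow> Ikf f \<sigma> = l * f \<sigma>"
  shows "\<bar>l\<bar> * osc f \<le> (1 - eps) * osc f"
proof -
  obtain a b where ab: "(a,b) \<in> tile_pairs" "osc f = \<bar>f a - f b\<bar>" using osc_attained[of f] by auto
  then obtain h where a: "a \<in> S" and b: "b \<in> S" and h: "\<forall>v\<in>B. v \<notin> tile h \<longrightarrow> a v = b v"
    unfolding tile_pairs_def by auto
  have "\<bar>l\<bar> * osc f = \<bar>Ikf f a - Ikf f b\<bar>"
    unfolding ab(2) ev[OF a] ev[OF b] by (simp only: abs_mult[symmetric] right_diff_distrib)
  also have "\<dots> \<le> (1 - eps) * osc f" by (rule Ikf_contract[OF a b h])
  finally show ?thesis .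
qed

lemma harmonic_constant:
  assumes ev: "\<And>\<sigma>. \<sigma> \<in> S \<Longrightarrow> Ikf f \<sigma> = f \<sigma>"
  shows "\<forall>a\<in>S. \<forall>b\<in>S. f a = f b"
proof -
  have "1 * osc f \<le> (1 - eps) * osc f" using eigenfunction_osc_contract[of f 1] ev by simp
  then have "eps * osc f \<le> 0" by (simp add: algebra_simps)
  then have "osc f \<le> 0" using eps_bounds(1) by (simp add: mult_le_0_iff)
  moreover have "0 \<le> osc f" using osc_attained[of f] by auto
  ultimately have "osc f = 0" by simp
  then show ?thesis using osc_zero_imp_constant by blast
qed

lemma eigenvalue_bound:
  assumes ev: "\<And>\<sigma>. \<sigma> \<in> S \<Longrightarrow> Ikf f \<sigma> = l * f \<sigma>" and l: "l \<noteq> 1"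
    and nz: "\<sigma>0 \<in> S" "f \<sigma>0 \<noteq> 0"
  shows "\<bar>l\<bar> \<le> 1 - eps"
proof -
  have "osc f \<noteq> 0"
  proof
    assume "osc f = 0"
    then have c: "\<forall>a\<in>S. f a = f \<sigma>0"
      using osc_zero_imp_constant nz(1) by blast
    have "Ikf f \<sigma>0 = (\<Sum>\<sigma>'\<in>S. Ik \<sigma>0 \<sigma>' * f \<sigma>0)" unfolding Ikf_def using c by (intro sum.cong) auto
    also have "\<dots> = f \<sigma>0" using sum_Ik[OF nz(1)] by (simp add: sum_distrib_right[symmetric])
    finally show False using ev[OF nz(1)] l nz(2) by simp
  qed
  moreover have "0 \<le> osc f" using osc_attained[of f] by auto
  ultimately show ?thesis
    using eigenfunction_osc_contract[OF ev] by (simp add: mult_le_cancel_right_pos)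
qed

lemma block_spectral_gap:
  assumes "B \<noteq> {}"
  shows "eps \<le> spectral_gap S Ik"
proof (rule reversible_kernel_spectral_gap[OF finite_S _ eps_bounds(1) Ik_nonneg sum_Ik])
  have "1 \<le> card B" using assms finite_block by (simp add: Suc_le_eq card_gt_0_iff)
  then have "q ^ 1 \<le> q ^ card B" using q_ge_2 by (intro power_increasing) auto
  then show "2 \<le> card S" using q_ge_2 by (simp add: card_configs[OF finite_block])
  show "\<And>\<sigma>. 0 < gibbs_weight \<sigma>" and "\<And>\<sigma> \<sigma>'. gibbs_weight \<sigma> * Ik \<sigma> \<sigma>' = gibbs_weight \<sigma>' * Ik \<sigma>' \<sigma>"
    by (rule gibbs_weight_pos, rule Ik_reversible)
  show "\<forall>\<sigma>\<in>S. \<forall>\<sigma>'\<in>S. f \<sigma> = f \<sigma>'" if "\<And>\<sigma>. \<sigma> \<in> S \<Longrightarrow> (\<Sum>\<sigma>'\<in>S. Ik \<sigma> \<sigma>' * f \<sigma>') = f \<sigma>" for f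
    by (rule harmonic_constant) (use that in \<open>simp add: Ikf_def\<close>)
  show "\<bar>l\<bar> \<le> 1 - eps" if ev: "\<And>\<sigma>. \<sigma> \<in> S \<Longrightarrow> (\<Sum>\<sigma>'\<in>S. Ik \<sigma> \<sigma>' * f \<sigma>') = l * f \<sigma>"
    and l: "l \<noteq> 1" and nz: "\<exists>\<sigma>\<in>S. f \<sigma> \<noteq> 0" for f l
  proof -
    obtain \<sigma>0 where "\<sigma>0 \<in> S" "f \<sigma>0 \<noteq> 0" using nz by blast
    then show ?thesis by (rule eigenvalue_bound[rotated 2]) (use ev l in \<open>simp_all add: Ikf_def\<close>)
  qed
qed

end

lemma finite_cube: "finite (cube d c n)"
proof -
  have "cube d c n \<subseteq> (\<lambda>f i. if i < d then f i else 0) ` PiE {..<d} (\<lambda>i. {c i..<c i + int n})"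
  proof
    fix y assume y: "y \<in> cube d c n"
    have "y = (\<lambda>i. if i < d then restrict y {..<d} i else 0)"
      using y unfolding cube_def by (auto simp: fun_eq_iff)
    moreover have "restrict y {..<d} \<in> PiE {..<d} (\<lambda>i. {c i..<c i + int n})"
      using y unfolding cube_def by auto
    ultimately show "y \<in> (\<lambda>f i. if i < d then f i else 0) ` PiE {..<d} (\<lambda>i. {c i..<c i + int n})" by blast
  qed
  then show ?thesis by (rule finite_subset) (intro finite_imageI finite_PiE, auto)
qed

theorem mainTheorem11:
  fixes d n q L :: nat and c x :: vtx and \<beta> :: real and \<tau> :: config
  assumes "d \<ge> 1" and "n \<ge> 1" and "q \<ge> 2" and "\<beta> > 0" and "odd L"
    and "\<forall>i<d. 0 \<le> x i \<and> x i \<le> int L + 2"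
    and "block d (cube d c n) L x \<noteq> {}"
    and "\<tau> \<in> configs (cube d c n - block d (cube d c n) L x) q"
  shows "spectral_gap (configs (block d (cube d c n) L x) q)
           (I_kernel d (cube d c n) q \<beta> (block d (cube d c n) L x) \<tau>)
         \<ge> 1 / 7 * exp (- 2 * \<beta> * real d * real L ^ d)"
proof -
  interpret block_dynamics d "cube d c n" q \<beta> L x \<tau>
    by unfold_locales (use assms finite_cube in \<open>auto simp: cube_def\<close>)
  have "eps = exp (- \<beta>) ^ (2 * d * L ^ d)" unfolding eps_def using p_bounds by simp
  also have "\<dots> = exp (- 2 * \<beta> * real d * real L ^ d)" by (simp add: exp_of_nat_mult[symmetric])
  finally have "eps = exp (- 2 * \<beta> * real d * real L ^ d)" .
  moreover have "eps \<le> spectral_gap S Ik" by (rule block_spectral_gap) (use assms in auto)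
  moreover have "0 < exp (- 2 * \<beta> * real d * real L ^ d)" by simp
  ultimately show ?thesis by linarith
qed

end
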